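(* Let $a=(a_1,a_2)\in(0,\infty)^2$ and $t=(t_1,t_2)$ with $1<t_1<t_2$, and let $$A_0:=\frac{\sqrt3}{2}\left(\frac{a_2t_2(t_2-1)S_1(t_2+2)}{a_1t_1(t_1-1)S_1(t_1+2)}\right)^{\frac1{t_2-t_1}}.$$ Then: (1) if $0<A<A_0$, $(1/2,\sqrt3/2)$ is a strict local minimizer of $(x,y)\mapsto E_{V^{LJ}_{a,t}}(x,y,A)$; (2) if $A>A_0$, $(1/2,\sqrt3/2)$ is a strict local maximizer of $(x,y)\mapsto E_{V^{LJ}_{a,t}}(x,y,A)$.
   Context: $V^{LJ}_{a,t}(r)=\frac{a_2}{r^{t_2}}-\frac{a_1}{r^{t_1}}$ for $r>0$. For $A>0$, $x\in\mathbb R$, $y>0$, $E_{f}(x,y,A)=\sum_{m,n} f\left(A\left[\frac1y(m+xn)^2+yn^2\right]\right)$, where $\sum_{m,n}$ denotes summation over all $(m,n)\in\mathbb Z^2\setminus\{(0,0)\}$. $S_1(s)=\sum_{m,n}\frac{m^4}{(m^2+mn+n^2)^s}$. *)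

theory Defs
  imports "HOL-Analysis.Analysis"
begin

definition V_LJ :: "real \<Rightarrow> real \<Rightarrow> real \<Rightarrow> real \<Rightarrow> real \<Rightarrow> real" where
  "V_LJ a1 a2 t1 t2 r = a2 / (r powr t2) - a1 / (r powr t1)"

definition Zstar :: "(int \<times> int) set" where
  "Zstar = UNIV - {(0, 0)}"

definition E_lat :: "(real \<Rightarrow> real) \<Rightarrow> real \<Rightarrow> real \<Rightarrow> real \<Rightarrow> real" where
  "E_lat f x y A =
     (\<Sum>\<^sub>\<infinity>(m, n)\<in>Zstar. f (A * ((real_of_int m + x * real_of_int n)^2 / y + y * (real_of_int n)^2)))"

definition S1 :: "real \<Rightarrow> real" where
  "S1 s = (\<Sum>\<^sub>\<infinity>(m, n)\<in>Zstar.
            (real_of_int m)^4 / (real_of_int (m^2 + m*n + n^2)) powr s)"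

definition strict_local_min2 :: "(real \<Rightarrow> real \<Rightarrow> real) \<Rightarrow> real \<Rightarrow> real \<Rightarrow> bool" where
  "strict_local_min2 F x0 y0 \<longleftrightarrow>
     (\<exists>\<delta>>0. \<forall>x y. (x, y) \<noteq> (x0, y0) \<and> dist (x, y) (x0, y0) < \<delta> \<longrightarrow> F x0 y0 < F x y)"

definition strict_local_max2 :: "(real \<Rightarrow> real \<Rightarrow> real) \<Rightarrow> real \<Rightarrow> real \<Rightarrow> bool" where
  "strict_local_max2 F x0 y0 \<longleftrightarrow>
     (\<exists>\<delta>>0. \<forall>x y. (x, y) \<noteq> (x0, y0) \<and> dist (x, y) (x0, y0) < \<delta> \<longrightarrow> F x y < F x0 y0)"

end

theory Submission
  imports Defs
begin

text \<open>
  Write the energy as \<open>a\<^sub>2 A\<^sup>-\<^sup>t\<^sup>2 Z\<^sub>t\<^sub>2 - a\<^sub>1 A\<^sup>-\<^sup>t\<^sup>1 Z\<^sub>t\<^sub>1\<close>, where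
  \<open>Z\<^sub>t(x,y) = \<Sum> ((m+xn)\<^sup>2/y + yn\<^sup>2)\<^sup>-\<^sup>t\<close> is the Epstein zeta function.
  Near the hexagonal point \<open>x = 1/2 + u\<close>, \<open>y = \<surd>3/2 + v\<close>, the quadratic form
  equals \<open>Q(m,n)(1 + e)/y\<close> with \<open>Q = m\<^sup>2 + mn + n\<^sup>2\<close> and \<open>e = O(|u| + |v|)\<close>, uniformly in \<open>(m,n)\<close>.
  Expanding \<open>(1 + e)\<^sup>-\<^sup>t\<close> to second order turns every summand into a quartic form in \<open>(m,n)\<close>
  divided by \<open>Q\<^sup>t\<^sup>+\<^sup>2\<close>. The symmetries \<open>(m,n) \<mapsto> (n,m)\<close> and \<open>(m,n) \<mapsto> (m+n,-n)\<close> of \<open>Q\<close>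
  express all quartic moments through \<open>S\<^sub>1(t+2)\<close>, and the linear terms cancel:
  \<open>Z\<^sub>t = y\<^sup>t S\<^sub>1(t+2) (3/2 + t(t-1)/2 (u\<^sup>2 + v\<^sup>2)) + O((|u| + |v|)\<^sup>3)\<close>.
  So the Hessian of the energy at the hexagonal point is a multiple of the identity, whose sign
  is that of \<open>a\<^sub>2t\<^sub>2(t\<^sub>2-1)S\<^sub>1(t\<^sub>2+2)(A/y)\<^sup>-\<^sup>t\<^sup>2 - a\<^sub>1t\<^sub>1(t\<^sub>1-1)S\<^sub>1(t\<^sub>1+2)(A/y)\<^sup>-\<^sup>t\<^sup>1\<close>;
  it changes sign exactly at \<open>A = A\<^sub>0\<close>.
\<close>

section \<open>Second-order expansions\<close>

lemma powr_one_plus_le: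
  fixes a t :: real
  assumes "-1/2 \<le> t" "t \<le> 1/2"
  shows "(1 + t) powr a \<le> (1/2) powr a + (3/2) powr a"
proof (cases "a \<ge> 0")
  case True
  have "(1 + t) powr a \<le> (3/2) powr a" by (rule powr_mono2) (use assms True in auto)
  moreover have "0 \<le> (1/2) powr a" by simp
  ultimately show ?thesis by linarith
next
  case False
  have "(1 + t) powr a \<le> (1/2) powr a" by (rule powr_mono2') (use assms False in auto)
  moreover have "0 \<le> (3/2) powr a" by simp
  ultimately show ?thesis by linarith
qed

lemma taylor2_one_plus_powr:
  fixes p :: real
  obtains K where "K \<ge> 0" "\<And>e. \<bar>e\<bar> \<le> 1/2 \<Longrightarrow>
      \<bar>(1 + e) powr p - (1 + p * e + p * (p - 1) / 2 * e^2)\<bar> \<le> K * \<bar>e\<bar>^3"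
proof -
  define K where "K = \<bar>p * (p-1) * (p-2)\<bar> * ((1/2) powr (p-3) + (3/2) powr (p-3)) / 6"
  have K0: "K \<ge> 0" unfolding K_def by (intro divide_nonneg_pos mult_nonneg_nonneg add_nonneg_nonneg) auto
  define diff :: "nat \<Rightarrow> real \<Rightarrow> real" where
    "diff = (\<lambda>k x. (\<Prod>i<k. (p - real i)) * (1 + x) powr (p - real k))"
  have bound: "\<bar>(1 + e) powr p - (1 + p * e + p * (p - 1) / 2 * e^2)\<bar> \<le> K * \<bar>e\<bar>^3"
    if e: "\<bar>e\<bar> \<le> 1/2" for e
  proof (cases "e = 0")
    case True then show ?thesis by simp
  next
    case False
    have D: "\<forall>m t. m < 3 \<and> -1/2 \<le> t \<and> t \<le> 1/2 \<longrightarrow> DERIV (diff m) t :> diff (Suc m) t"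
    proof (intro allI impI)
      fix m :: nat and t :: real
      assume "m < 3 \<and> -1/2 \<le> t \<and> t \<le> 1/2"
      then have pos: "1 + t > 0" by auto
      have "DERIV (\<lambda>x. (1 + x) powr (p - real m)) t :> (p - real m) * (1 + t) powr (p - real m - of_nat 1) * 1"
        by (rule DERIV_fun_powr) (use pos in \<open>auto intro!: derivative_eq_intros\<close>)
      then have "DERIV (\<lambda>x. (\<Prod>i<m. (p - real i)) * (1 + x) powr (p - real m)) t :>
          (\<Prod>i<m. (p - real i)) * ((p - real m) * (1 + t) powr (p - real m - of_nat 1) * 1)"
        by (rule DERIV_cmult)
      then show "DERIV (diff m) t :> diff (Suc m) t"
        unfolding diff_def by (simp add: algebra_simps)
    qed
    obtain t where t: "(if e < 0 then e < t \<and> t < 0 else 0 < t \<and> t < e)"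
      and eq: "(1 + e) powr p = (\<Sum>m<3. (diff m 0 / fact m) * (e - 0)^m) + (diff 3 t / fact 3) * (e - 0)^3"
    proof -
      have d0: "diff 0 = (\<lambda>x. (1 + x) powr p)" by (simp add: diff_def)
      have i: "-1/2 \<le> (0::real)" "(0::real) \<le> 1/2" "-1/2 \<le> e" "e \<le> 1/2" using e by auto
      from Taylor[of 3 diff "\<lambda>x. (1 + x) powr p" "-1/2" "1/2" 0 e, OF zero_less_numeral d0 D i False]
      show ?thesis using that by blast
    qed
    have tb: "-1/2 \<le> t" "t \<le> 1/2" using t e by (auto split: if_splits)
    have sum: "(\<Sum>m<3. (diff m 0 / fact m) * (e - 0)^m) = 1 + p * e + p * (p - 1) / 2 * e^2"
      by (simp add: diff_def eval_nat_numeral fact_numeral lessThan_Suc algebra_simps)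
    have d3: "diff 3 t = p * (p-1) * (p-2) * (1 + t) powr (p - 3)"
      by (simp add: diff_def eval_nat_numeral lessThan_Suc algebra_simps)
    have "\<bar>(1 + e) powr p - (1 + p * e + p * (p - 1) / 2 * e^2)\<bar> = \<bar>diff 3 t / 6 * e^3\<bar>"
      using eq sum by (simp add: fact_numeral)
    also have "\<dots> = \<bar>p * (p-1) * (p-2)\<bar> * (1 + t) powr (p - 3) / 6 * \<bar>e\<bar>^3"
      by (simp add: d3 abs_mult power_abs)
    also have "\<dots> \<le> K * \<bar>e\<bar>^3" unfolding K_def
      by (intro mult_right_mono divide_right_mono mult_left_mono powr_one_plus_le tb) auto
    finally show ?thesis .
  qed
  show ?thesis using that K0 bound by blast
qed

text \<open>The radius \<open>1/12\<close> keeps the relative perturbation of the hexagonal form below \<open>1/2\<close>.\<close>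

definition cubic_near_zero :: "(real \<Rightarrow> real \<Rightarrow> real) \<Rightarrow> bool" where
  "cubic_near_zero f \<longleftrightarrow> (\<exists>K. \<forall>u v. \<bar>u\<bar> + \<bar>v\<bar> \<le> 1/12 \<longrightarrow> \<bar>f u v\<bar> \<le> K * (\<bar>u\<bar> + \<bar>v\<bar>)^3)"

lemma cubic_near_zeroI:
  "(\<And>u v. \<bar>u\<bar> + \<bar>v\<bar> \<le> 1/12 \<Longrightarrow> \<bar>f u v\<bar> \<le> K * (\<bar>u\<bar> + \<bar>v\<bar>)^3) \<Longrightarrow> cubic_near_zero f"
  unfolding cubic_near_zero_def by blast

lemma cubic_near_zeroE:
  assumes "cubic_near_zero f"
  obtains K where "K \<ge> 0" "\<And>u v. \<bar>u\<bar> + \<bar>v\<bar> \<le> 1/12 \<Longrightarrow> \<bar>f u v\<bar> \<le> K * (\<bar>u\<bar> + \<bar>v\<bar>)^3"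
proof -
  obtain K where K: "\<And>u v. \<bar>u\<bar> + \<bar>v\<bar> \<le> 1/12 \<Longrightarrow> \<bar>f u v\<bar> \<le> K * (\<bar>u\<bar> + \<bar>v\<bar>)^3"
    using assms unfolding cubic_near_zero_def by blast
  have "\<bar>f u v\<bar> \<le> max K 0 * (\<bar>u\<bar> + \<bar>v\<bar>)^3" if "\<bar>u\<bar> + \<bar>v\<bar> \<le> 1/12" for u v
    by (rule order.trans[OF K[OF that]]) (intro mult_right_mono; simp)
  then show ?thesis using that[of "max K 0"] by simp
qed

lemma cubic_near_zero_at_zero:
  assumes "cubic_near_zero f"
  shows "f 0 0 = 0"
proof -
  obtain K where "\<And>u v. \<bar>u\<bar> + \<bar>v\<bar> \<le> 1/12 \<Longrightarrow> \<bar>f u v\<bar> \<le> K * (\<bar>u\<bar> + \<bar>v\<bar>)^3"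
    using cubic_near_zeroE[OF assms] by blast
  from this[of 0 0] show ?thesis by simp
qed

lemma cubic_near_zero_cong:
  assumes "cubic_near_zero f" and "\<And>u v. \<bar>u\<bar> + \<bar>v\<bar> \<le> 1/12 \<Longrightarrow> f u v = g u v"
  shows "cubic_near_zero g"
  using assms unfolding cubic_near_zero_def by metis

lemma cubic_near_zero_add:
  assumes "cubic_near_zero f" "cubic_near_zero g"
  shows "cubic_near_zero (\<lambda>u v. f u v + g u v)"
proof -
  obtain K L where "\<And>u v. \<bar>u\<bar> + \<bar>v\<bar> \<le> 1/12 \<Longrightarrow> \<bar>f u v\<bar> \<le> K * (\<bar>u\<bar> + \<bar>v\<bar>)^3"
    "\<And>u v. \<bar>u\<bar> + \<bar>v\<bar> \<le> 1/12 \<Longrightarrow> \<bar>g u v\<bar> \<le> L * (\<bar>u\<bar> + \<bar>v\<bar>)^3"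
    using assms unfolding cubic_near_zero_def by blast
  then have "\<bar>f u v + g u v\<bar> \<le> (K + L) * (\<bar>u\<bar> + \<bar>v\<bar>)^3" if "\<bar>u\<bar> + \<bar>v\<bar> \<le> 1/12" for u v
    using abs_triangle_ineq[of "f u v" "g u v"] that by (fastforce simp: distrib_right)
  then show ?thesis by (rule cubic_near_zeroI)
qed

lemma cubic_near_zero_mult_bounded:
  assumes "cubic_near_zero f" and "\<And>u v. \<bar>u\<bar> + \<bar>v\<bar> \<le> 1/12 \<Longrightarrow> \<bar>g u v\<bar> \<le> B"
  shows "cubic_near_zero (\<lambda>u v. g u v * f u v)"
proof -
  obtain K where K0: "K \<ge> 0" and K: "\<And>u v. \<bar>u\<bar> + \<bar>v\<bar> \<le> 1/12 \<Longrightarrow> \<bar>f u v\<bar> \<le> K * (\<bar>u\<bar> + \<bar>v\<bar>)^3"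
    using cubic_near_zeroE[OF assms(1)] by blast
  show ?thesis
  proof (rule cubic_near_zeroI[of _ "B * K"])
    fix u v :: real assume r: "\<bar>u\<bar> + \<bar>v\<bar> \<le> 1/12"
    have "\<bar>g u v * f u v\<bar> \<le> B * (K * (\<bar>u\<bar> + \<bar>v\<bar>)^3)"
      unfolding abs_mult using assms(2)[OF r] K[OF r] by (intro mult_mono) auto
    then show "\<bar>g u v * f u v\<bar> \<le> B * K * (\<bar>u\<bar> + \<bar>v\<bar>)^3" by (simp add: mult.assoc)
  qed
qed

lemma cubic_near_zero_cmult: "cubic_near_zero f \<Longrightarrow> cubic_near_zero (\<lambda>u v. c * f u v)"
  by (rule cubic_near_zero_mult_bounded[of _ _ "\<bar>c\<bar>"]) auto

lemma cubic_near_zero_diff: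
  assumes "cubic_near_zero f" "cubic_near_zero g"
  shows "cubic_near_zero (\<lambda>u v. f u v - g u v)"
  using cubic_near_zero_add[OF assms(1) cubic_near_zero_cmult[OF assms(2), of "-1"]] by simp

lemma strict_local_min2_of_expansion:
  fixes F :: "real \<Rightarrow> real \<Rightarrow> real"
  assumes D: "D > 0"
    and exp: "cubic_near_zero (\<lambda>u v. F (x0 + u) (y0 + v) - F x0 y0 - D * (u^2 + v^2))"
  shows "strict_local_min2 F x0 y0"
proof -
  obtain K where K0: "K \<ge> 0" and H: "\<And>u v. \<bar>u\<bar> + \<bar>v\<bar> \<le> 1/12 \<Longrightarrow>
      \<bar>F (x0 + u) (y0 + v) - F x0 y0 - D * (u^2 + v^2)\<bar> \<le> K * (\<bar>u\<bar> + \<bar>v\<bar>)^3"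
    using cubic_near_zeroE[OF exp] by blast
  define \<delta> where "\<delta> = min (1/24) (D / (4*K+1))"
  have d0: "\<delta> > 0" unfolding \<delta>_def using D K0 by simp
  have "F x0 y0 < F x y" if ne: "(x, y) \<noteq> (x0, y0)" and dl: "dist (x, y) (x0, y0) < \<delta>" for x y
  proof -
    define u v where "u = x - x0" and "v = y - y0"
    define r where "r = \<bar>u\<bar> + \<bar>v\<bar>"
    have "\<bar>u\<bar> < \<delta>" "\<bar>v\<bar> < \<delta>"
      using dl dist_fst_le[of "(x,y)" "(x0,y0)"] dist_snd_le[of "(x,y)" "(x0,y0)"]
      unfolding u_def v_def dist_real_def by auto
    then have r\<delta>: "r \<le> 2 * \<delta>" unfolding r_def by simp
    have r0: "r > 0" unfolding r_def using ne unfolding u_def v_def by auto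
    have "r \<le> 1/12" using r\<delta> unfolding \<delta>_def by simp
    then have B: "\<bar>F x y - F x0 y0 - D * (u^2 + v^2)\<bar> \<le> K * r^3"
      using H[of u v] unfolding u_def v_def r_def by simp
    have "0 \<le> (\<bar>u\<bar> - \<bar>v\<bar>)^2" by simp
    then have "r^2 \<le> 2 * (u^2 + v^2)"
      unfolding r_def by (simp add: power2_eq_square algebra_simps)
    then have Dr: "D * r^2 / 2 \<le> D * (u^2 + v^2)" using D by simp
    have "K * r \<le> K * (2 * (D / (4*K+1)))"
      using K0 r\<delta> unfolding \<delta>_def by (intro mult_left_mono) auto
    also have "\<dots> < D / 2" using K0 D by (simp add: field_simps)
    finally have "K * r * r^2 < D / 2 * r^2" using r0 by (intro mult_strict_right_mono) auto
    then have "K * r^3 < D * r^2 / 2" by (simp add: power2_eq_square power3_eq_cube)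
    then show ?thesis using B Dr by linarith
  qed
  then show ?thesis unfolding strict_local_min2_def using d0 by blast
qed

lemma strict_local_max2_of_expansion:
  fixes F :: "real \<Rightarrow> real \<Rightarrow> real"
  assumes "D < 0"
    and "cubic_near_zero (\<lambda>u v. F (x0 + u) (y0 + v) - F x0 y0 - D * (u^2 + v^2))"
  shows "strict_local_max2 F x0 y0"
proof -
  have "cubic_near_zero (\<lambda>u v. - F (x0 + u) (y0 + v) - (- F x0 y0) - (- D) * (u^2 + v^2))"
    using cubic_near_zero_cmult[OF assms(2), of "-1"] by (simp add: algebra_simps)
  then have "strict_local_min2 (\<lambda>x y. - F x y) x0 y0"
    using assms(1) by (intro strict_local_min2_of_expansion[of "- D"]) auto
  then show ?thesis unfolding strict_local_min2_def strict_local_max2_def by simp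
qed

section \<open>Lattice sums of the hexagonal form\<close>

definition one_plus_abs_powr :: "real \<Rightarrow> int \<Rightarrow> real" where
  "one_plus_abs_powr r k = (1 + real_of_int \<bar>k\<bar>) powr (- r)"

lemma summable_on_int_one_plus_abs_powr:
  assumes "r > 1"
  shows "one_plus_abs_powr r summable_on UNIV"
proof -
  have "summable (\<lambda>n::nat. real (Suc n) powr (- r))"
    using assms by (subst summable_Suc_iff) (subst summable_real_powr_iff; simp)
  then have "(\<lambda>n::nat. (1 + real n) powr (- r)) summable_on UNIV"
    by (intro summable_nonneg_imp_summable_on) (simp_all add: add.commute)
  then have pos: "one_plus_abs_powr r summable_on range int"
    and neg: "one_plus_abs_powr r summable_on range (\<lambda>n::nat. - int n)"
    by (subst summable_on_reindex; simp add: inj_on_def o_def one_plus_abs_powr_def)+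
  have "k \<in> range int \<union> range (\<lambda>n::nat. - int n)" for k :: int
  proof (cases "k \<ge> 0")
    case True then show ?thesis by (auto intro!: image_eqI[of _ _ "nat k"])
  next
    case False then show ?thesis by (auto intro!: image_eqI[of _ _ "nat (-k)"])
  qed
  then have "range int \<union> range (\<lambda>n::nat. - int n) = UNIV" by blast
  with summable_on_union[OF pos neg] show ?thesis by simp
qed

lemma summable_on_int_pair_one_plus_abs_powr:
  assumes "r > 1"
  shows "(\<lambda>(m,n). one_plus_abs_powr r m * one_plus_abs_powr r n) summable_on UNIV"
proof -
  note summable = summable_on_int_one_plus_abs_powr[OF assms]
  have "(\<lambda>(m,n). one_plus_abs_powr r m * one_plus_abs_powr r n) summable_on Sigma UNIV (\<lambda>_. UNIV)"
  proof (rule summable_on_SigmaI[where g = "\<lambda>m. one_plus_abs_powr r m * infsum (one_plus_abs_powr r) UNIV"])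
    fix m :: int
    show "((\<lambda>n. (\<lambda>(m,n). one_plus_abs_powr r m * one_plus_abs_powr r n) (m, n))
        has_sum one_plus_abs_powr r m * infsum (one_plus_abs_powr r) UNIV) UNIV"
      using has_sum_cmult_right[OF has_sum_infsum[OF summable]] by simp
  next
    show "(\<lambda>m. one_plus_abs_powr r m * infsum (one_plus_abs_powr r) UNIV) summable_on UNIV"
      by (rule summable_on_cmult_left[OF summable])
  qed (auto simp: one_plus_abs_powr_def)
  then show ?thesis by simp
qed

definition hex_form :: "int \<Rightarrow> int \<Rightarrow> real" where
  "hex_form m n = real_of_int (m^2 + m*n + n^2)"

lemma hex_form_ge_sum_squares: "2 * hex_form m n \<ge> real_of_int (m^2 + n^2)"
proof -
  have "0 \<le> (real_of_int m + real_of_int n)^2" by simp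
  then show ?thesis by (simp add: hex_form_def power2_eq_square algebra_simps)
qed

lemma hex_form_pos: "(m, n) \<in> Zstar \<Longrightarrow> hex_form m n > 0"
proof -
  assume "(m,n) \<in> Zstar"
  then have "m \<noteq> 0 \<or> n \<noteq> 0" by (auto simp: Zstar_def)
  then have "real_of_int (m^2 + n^2) > 0" by (auto simp: add_pos_nonneg add_nonneg_pos)
  with hex_form_ge_sum_squares[of m n] show ?thesis by linarith
qed

lemma hex_form_ge_prod:
  assumes "(m, n) \<in> Zstar"
  shows "(1 + real_of_int \<bar>m\<bar>) * (1 + real_of_int \<bar>n\<bar>) \<le> 8 * hex_form m n"
proof -
  define M where "M = max \<bar>real_of_int m\<bar> \<bar>real_of_int n\<bar>"
  have "m \<noteq> 0 \<or> n \<noteq> 0" using assms by (auto simp: Zstar_def)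
  then have M1: "M \<ge> 1" unfolding M_def by (auto simp: le_max_iff_disj)
  have a: "1 + real_of_int \<bar>m\<bar> \<le> 2 * M" "1 + real_of_int \<bar>n\<bar> \<le> 2 * M" using M1 unfolding M_def by auto
  have "(1 + real_of_int \<bar>m\<bar>) * (1 + real_of_int \<bar>n\<bar>) \<le> (2*M) * (2*M)"
    by (rule mult_mono) (use a M1 in auto)
  also have "\<dots> \<le> 4 * real_of_int (m^2 + n^2)"
    unfolding M_def by (auto simp: max_def power2_eq_square abs_mult_self_eq)
  also have "\<dots> \<le> 4 * (2 * hex_form m n)" by (intro mult_left_mono hex_form_ge_sum_squares) simp
  also have "\<dots> = 8 * hex_form m n" by simp
  finally show ?thesis .
qed

lemma summable_on_hex_form_powr:
  assumes "r > 1"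
  shows "(\<lambda>(m,n). hex_form m n powr (- r)) summable_on Zstar"
proof -
  have s: "(\<lambda>(m,n). 8 powr r * (one_plus_abs_powr r m * one_plus_abs_powr r n)) summable_on Zstar"
    using summable_on_subset[OF summable_on_cmult_right[OF summable_on_int_pair_one_plus_abs_powr[OF assms], of "8 powr r"]]
    by (simp add: case_prod_unfold)
  show ?thesis
  proof (rule summable_on_comparison_test[OF s])
    fix x assume x: "x \<in> Zstar"
    obtain m n where xe: "x = (m,n)" by force
    have "hex_form m n powr (- r) = (8 * hex_form m n) powr (-r) * 8 powr r"
      by (simp add: powr_mult powr_minus field_simps)
    also have "\<dots> \<le> ((1 + real_of_int \<bar>m\<bar>) * (1 + real_of_int \<bar>n\<bar>)) powr (-r) * 8 powr r"
      by (intro mult_right_mono powr_mono2') (use hex_form_ge_prod[of m n] x xe assms in auto)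
    also have "\<dots> = 8 powr r * (one_plus_abs_powr r m * one_plus_abs_powr r n)" by (simp add: one_plus_abs_powr_def powr_mult)
    finally show "(\<lambda>(m,n). hex_form m n powr (- r)) x \<le> (\<lambda>(m,n). 8 powr r * (one_plus_abs_powr r m * one_plus_abs_powr r n)) x"
      using xe by simp
  qed (auto simp: case_prod_unfold)
qed

lemma summable_on_Zstar_of_hex_bound:
  fixes f :: "int \<times> int \<Rightarrow> real"
  assumes r: "r > 1" and b: "\<And>m n. (m,n) \<in> Zstar \<Longrightarrow> \<bar>f (m,n)\<bar> \<le> C * hex_form m n powr (- r)"
  shows "f summable_on Zstar"
proof -
  have g: "(\<lambda>x. C * (case x of (m,n) \<Rightarrow> hex_form m n powr (- r))) summable_on Zstar"
    by (rule summable_on_cmult_right[OF summable_on_hex_form_powr[OF r]])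
  have "(\<lambda>x. norm (f x)) summable_on Zstar"
  proof (rule summable_on_comparison_test[OF g])
    fix x assume "x \<in> Zstar"
    then obtain m n where x: "x = (m,n)" "(m,n) \<in> Zstar" by (cases x) auto
    have "\<bar>f (m,n)\<bar> \<le> C * hex_form m n powr (- r)" using b x by auto
    then show "norm (f x) \<le> C * (case x of (m,n) \<Rightarrow> hex_form m n powr (- r))"
      using x by auto
  qed simp
  then show ?thesis using summable_on_iff_abs_summable_on_real by blast
qed

lemma abs_quartic_monomial_le:
  fixes m n :: int
  assumes "i + j = 4"
  shows "\<bar>real_of_int m ^ i * real_of_int n ^ j\<bar> \<le> 4 * hex_form m n ^ 2"
proof -
  define M where "M = max \<bar>real_of_int m\<bar> \<bar>real_of_int n\<bar>"
  have "\<bar>real_of_int m ^ i * real_of_int n ^ j\<bar> = \<bar>real_of_int m\<bar> ^ i * \<bar>real_of_int n\<bar> ^ j"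
    by (simp add: abs_mult power_abs)
  also have "\<dots> \<le> M ^ i * M ^ j"
    by (intro mult_mono power_mono) (auto simp: M_def)
  also have "\<dots> = M ^ (i + j)" by (simp add: power_add)
  also have "\<dots> = M ^ 4" using assms by simp
  also have "\<dots> = (M^2)^2" by (simp add: power_mult[symmetric])
  also have "\<dots> \<le> (real_of_int (m^2 + n^2))^2"
    by (intro power_mono) (auto simp: M_def max_def)
  also have "\<dots> \<le> (2 * hex_form m n)^2"
    by (intro power_mono hex_form_ge_sum_squares) auto
  finally show ?thesis by (simp add: power_mult_distrib)
qed

lemma hex_form_powr_mult_sq: "(m,n) \<in> Zstar \<Longrightarrow> hex_form m n powr (- s) * hex_form m n ^ 2 = hex_form m n powr (2 - s)"
proof -
  assume z: "(m,n) \<in> Zstar"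
  have p: "hex_form m n > 0" using hex_form_pos[OF z] .
  have "hex_form m n powr (2 - s) = hex_form m n powr 2 * hex_form m n powr (- s)"
    by (subst powr_add[symmetric]) simp
  also have "hex_form m n powr 2 = hex_form m n ^ 2" using p by (simp add: powr_numeral)
  finally show ?thesis by simp
qed

section \<open>Quartic moments\<close>

definition hex_moment :: "real \<Rightarrow> nat \<Rightarrow> nat \<Rightarrow> int \<times> int \<Rightarrow> real" where
  "hex_moment s i j = (\<lambda>(m,n). hex_form m n powr (- s) * (real_of_int m ^ i * real_of_int n ^ j))"

lemma summable_on_hex_moment:
  assumes "s > 3" "i + j = 4"
  shows "hex_moment s i j summable_on Zstar"
proof (rule summable_on_Zstar_of_hex_bound[where r = "s - 2" and C = 4])
  show "s - 2 > 1" using assms by simp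
  fix m n :: int assume z: "(m,n) \<in> Zstar"
  have "\<bar>hex_moment s i j (m,n)\<bar> = hex_form m n powr (- s) * \<bar>real_of_int m ^ i * real_of_int n ^ j\<bar>"
    by (simp add: hex_moment_def abs_mult)
  also have "\<dots> \<le> hex_form m n powr (- s) * (4 * hex_form m n ^ 2)"
    by (intro mult_left_mono abs_quartic_monomial_le assms) auto
  also have "\<dots> = 4 * hex_form m n powr (- (s - 2))" using hex_form_powr_mult_sq[OF z, of s] by simp
  finally show "\<bar>hex_moment s i j (m,n)\<bar> \<le> 4 * hex_form m n powr (- (s - 2))" .
qed

lemma S1_eq_hex_moment: "S1 s = infsum (hex_moment s 4 0) Zstar"
  unfolding S1_def hex_moment_def hex_form_def
  by (rule infsum_cong) (auto simp: powr_minus_divide)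

lemma S1_pos:
  assumes "s > 3"
  shows "S1 s > 0"
proof -
  have "infsum (hex_moment s 4 0) {(1,0)} \<le> infsum (hex_moment s 4 0) Zstar"
  proof (rule infsum_mono2)
    show "hex_moment s 4 0 summable_on Zstar" using summable_on_hex_moment[OF assms] by simp
    show "{(1::int, 0::int)} \<subseteq> Zstar" by (simp add: Zstar_def)
    fix x assume "x \<in> Zstar - {(1,0)}"
    then show "hex_moment s 4 0 x \<ge> 0" by (cases x) (simp add: hex_moment_def)
  qed simp
  moreover have "infsum (hex_moment s 4 0) {(1,0)} = 1" by (simp add: hex_moment_def hex_form_def)
  ultimately show ?thesis using S1_eq_hex_moment[of s] by simp
qed

lemma infsum_linear_comb5:
  fixes f0 f1 f2 f3 f4 :: "'a \<Rightarrow> real"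
  assumes "f0 summable_on A" "f1 summable_on A" "f2 summable_on A" "f3 summable_on A" "f4 summable_on A"
  shows "infsum (\<lambda>x. c0 * f0 x + c1 * f1 x + c2 * f2 x + c3 * f3 x + c4 * f4 x) A =
         c0 * infsum f0 A + c1 * infsum f1 A + c2 * infsum f2 A + c3 * infsum f3 A + c4 * infsum f4 A"
  and "(\<lambda>x. c0 * f0 x + c1 * f1 x + c2 * f2 x + c3 * f3 x + c4 * f4 x) summable_on A"
proof -
  note s = summable_on_cmult_right[OF assms(1), of c0] summable_on_cmult_right[OF assms(2), of c1]
    summable_on_cmult_right[OF assms(3), of c2] summable_on_cmult_right[OF assms(4), of c3]
    summable_on_cmult_right[OF assms(5), of c4]
  note s2 = summable_on_add[OF s(1) s(2)]
  note s3 = summable_on_add[OF s2 s(3)]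
  note s4 = summable_on_add[OF s3 s(4)]
  show "(\<lambda>x. c0 * f0 x + c1 * f1 x + c2 * f2 x + c3 * f3 x + c4 * f4 x) summable_on A"
    using summable_on_add[OF s4 s(5)] .
  show "infsum (\<lambda>x. c0 * f0 x + c1 * f1 x + c2 * f2 x + c3 * f3 x + c4 * f4 x) A =
         c0 * infsum f0 A + c1 * infsum f1 A + c2 * infsum f2 A + c3 * infsum f3 A + c4 * infsum f4 A"
    by (simp add: infsum_add[OF s4 s(5)] infsum_add[OF s3 s(4)] infsum_add[OF s2 s(3)]
        infsum_add[OF s(1) s(2)] infsum_cmult_right[OF assms(1)] infsum_cmult_right[OF assms(2)]
        infsum_cmult_right[OF assms(3)] infsum_cmult_right[OF assms(4)] infsum_cmult_right[OF assms(5)])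
qed

lemma infsum_Zstar_swap:
  "infsum (\<lambda>(m,n). g n m) Zstar = infsum (\<lambda>(m,n). g m n) Zstar"
  by (rule infsum_reindex_bij_witness[where i = "\<lambda>(m,n). (n,m)" and j = "\<lambda>(m,n). (n,m)"])
    (auto simp: Zstar_def)

lemma infsum_Zstar_shear:
  "infsum (\<lambda>(m,n). g (m+n) (-n)) Zstar = infsum (\<lambda>(m,n). g m n) Zstar"
  by (rule infsum_reindex_bij_witness[where i = "\<lambda>(m,n). (m+n,-n)" and j = "\<lambda>(m,n). (m+n,-n)"])
    (auto simp: Zstar_def)

lemma hex_form_swap: "hex_form n m = hex_form m n"
  by (simp add: hex_form_def algebra_simps)

lemma hex_form_shear: "hex_form (m+n) (-n) = hex_form m n"
  by (simp add: hex_form_def power2_eq_square algebra_simps)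

lemma hex_moment40_shear:
  "hex_moment s 4 0 (m+n, -n) = 1 * hex_moment s 4 0 (m,n) + 4 * hex_moment s 3 1 (m,n)
     + 6 * hex_moment s 2 2 (m,n) + 4 * hex_moment s 1 3 (m,n) + 1 * hex_moment s 0 4 (m,n)"
  unfolding hex_moment_def prod.case hex_form_shear of_int_add of_int_minus by algebra

lemma hex_moment31_shear:
  "hex_moment s 3 1 (m+n, -n) = 0 * hex_moment s 4 0 (m,n) + (-1) * hex_moment s 3 1 (m,n)
     + (-3) * hex_moment s 2 2 (m,n) + (-3) * hex_moment s 1 3 (m,n) + (-1) * hex_moment s 0 4 (m,n)"
  unfolding hex_moment_def prod.case hex_form_shear of_int_add of_int_minus by algebra

text \<open>The two symmetries of the hexagonal form give four linear relations among the five quartic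
  moments; with \<open>M\<^sub>4\<^sub>0 = S\<^sub>1\<close> they determine all of them.\<close>

lemma infsum_hex_moments:
  assumes s: "s > 3"
  shows "infsum (hex_moment s 3 1) Zstar = - S1 s / 2" "infsum (hex_moment s 2 2) Zstar = S1 s / 2"
    "infsum (hex_moment s 1 3) Zstar = - S1 s / 2" "infsum (hex_moment s 0 4) Zstar = S1 s"
proof -
  define M40 M31 M22 M13 M04 where "M40 = infsum (hex_moment s 4 0) Zstar"
    "M31 = infsum (hex_moment s 3 1) Zstar" "M22 = infsum (hex_moment s 2 2) Zstar"
    "M13 = infsum (hex_moment s 1 3) Zstar" "M04 = infsum (hex_moment s 0 4) Zstar"
  note defs = M40_M31_M22_M13_M04_def
  have lin: "infsum (\<lambda>x. d0 * hex_moment s 4 0 x + d1 * hex_moment s 3 1 x + d2 * hex_moment s 2 2 x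
      + d3 * hex_moment s 1 3 x + d4 * hex_moment s 0 4 x) Zstar
      = d0 * M40 + d1 * M31 + d2 * M22 + d3 * M13 + d4 * M04" for d0 d1 d2 d3 d4
    unfolding defs by (rule infsum_linear_comb5(1)) (use summable_on_hex_moment[OF s] in simp_all)
  have swap40: "M04 = M40" and swap31: "M13 = M31"
    unfolding defs hex_moment_def
    using infsum_Zstar_swap[of "\<lambda>m n. hex_form m n powr (- s) * (real_of_int m ^ 4 * real_of_int n ^ 0)"]
      infsum_Zstar_swap[of "\<lambda>m n. hex_form m n powr (- s) * (real_of_int m ^ 3 * real_of_int n ^ 1)"]
    by (simp_all add: hex_form_swap mult.commute)
  have shear40: "M40 = M40 + 4 * M31 + 6 * M22 + 4 * M13 + M04"
  proof -
    have "M40 = infsum (\<lambda>(m,n). hex_moment s 4 0 (m+n, -n)) Zstar"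
      unfolding defs using infsum_Zstar_shear[of "\<lambda>m n. hex_moment s 4 0 (m,n)"] by simp
    also have "\<dots> = 1 * M40 + 4 * M31 + 6 * M22 + 4 * M13 + 1 * M04"
      unfolding hex_moment40_shear[symmetric] lin[symmetric]
      by (rule infsum_cong) (auto simp only: hex_moment40_shear split: prod.split)
    finally show ?thesis by simp
  qed
  have shear31: "M31 = - M31 - 3 * M22 - 3 * M13 - M04"
  proof -
    have "M31 = infsum (\<lambda>(m,n). hex_moment s 3 1 (m+n, -n)) Zstar"
      unfolding defs using infsum_Zstar_shear[of "\<lambda>m n. hex_moment s 3 1 (m,n)"] by simp
    also have "\<dots> = 0 * M40 + (-1) * M31 + (-3) * M22 + (-3) * M13 + (-1) * M04"
      unfolding lin[symmetric]
      by (rule infsum_cong) (auto simp only: hex_moment31_shear split: prod.split)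
    finally show ?thesis by simp
  qed
  have "M40 = S1 s" unfolding defs by (rule S1_eq_hex_moment[symmetric])
  then show "M31 = - S1 s / 2" "M22 = S1 s / 2" "M13 = - S1 s / 2" "M04 = S1 s"
    using swap40 swap31 shear40 shear31 by linarith+
qed

lemma summable_on_hex_quartic:
  assumes "s > 3"
  shows "(\<lambda>(m,n). hex_form m n powr (- s) * (c0 * real_of_int m ^ 4 + c1 * real_of_int m ^ 3 * real_of_int n
           + c2 * real_of_int m ^ 2 * real_of_int n ^ 2 + c3 * real_of_int m * real_of_int n ^ 3
           + c4 * real_of_int n ^ 4)) summable_on Zstar"
proof -
  have "(\<lambda>x. c0 * hex_moment s 4 0 x + c1 * hex_moment s 3 1 x + c2 * hex_moment s 2 2 x
      + c3 * hex_moment s 1 3 x + c4 * hex_moment s 0 4 x) summable_on Zstar"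
    by (rule infsum_linear_comb5(2)) (use summable_on_hex_moment[OF assms] in simp_all)
  then show ?thesis
    by (rule summable_on_cong[THEN iffD1, rotated]) (auto simp: hex_moment_def algebra_simps)
qed

lemma infsum_hex_quartic:
  assumes "s > 3"
  shows "infsum (\<lambda>(m,n). hex_form m n powr (- s) * (c0 * real_of_int m ^ 4 + c1 * real_of_int m ^ 3 * real_of_int n
           + c2 * real_of_int m ^ 2 * real_of_int n ^ 2 + c3 * real_of_int m * real_of_int n ^ 3
           + c4 * real_of_int n ^ 4)) Zstar
       = S1 s * (c0 - c1/2 + c2/2 - c3/2 + c4)"
proof -
  have "infsum (\<lambda>(m,n). hex_form m n powr (- s) * (c0 * real_of_int m ^ 4 + c1 * real_of_int m ^ 3 * real_of_int n
           + c2 * real_of_int m ^ 2 * real_of_int n ^ 2 + c3 * real_of_int m * real_of_int n ^ 3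
           + c4 * real_of_int n ^ 4)) Zstar
      = infsum (\<lambda>x. c0 * hex_moment s 4 0 x + c1 * hex_moment s 3 1 x + c2 * hex_moment s 2 2 x
          + c3 * hex_moment s 1 3 x + c4 * hex_moment s 0 4 x) Zstar"
    by (rule infsum_cong) (auto simp: hex_moment_def algebra_simps)
  also have "\<dots> = c0 * infsum (hex_moment s 4 0) Zstar + c1 * infsum (hex_moment s 3 1) Zstar
      + c2 * infsum (hex_moment s 2 2) Zstar + c3 * infsum (hex_moment s 1 3) Zstar
      + c4 * infsum (hex_moment s 0 4) Zstar"
    by (rule infsum_linear_comb5(1)) (use summable_on_hex_moment[OF assms] in simp_all)
  finally show ?thesis
    unfolding infsum_hex_moments[OF assms] S1_eq_hex_moment[symmetric] by (simp add: algebra_simps)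
qed

section \<open>Perturbing the hexagonal lattice\<close>

definition hex_y :: real where "hex_y = sqrt 3 / 2"

lemma hex_y_sq: "hex_y^2 = 3/4" by (simp add: hex_y_def power_divide)
lemma hex_y_pos: "hex_y > 0" by (simp add: hex_y_def)
lemma hex_y_le_1: "hex_y \<le> 1"
proof -
  have "sqrt 3 \<le> sqrt (2^2)" by (rule real_sqrt_le_mono) simp
  then have "sqrt 3 \<le> 2" by simp
  then show ?thesis by (simp add: hex_y_def)
qed

lemma hex_y_ge_half: "hex_y \<ge> 1/2"
proof -
  have "sqrt 1 \<le> sqrt 3" by (rule real_sqrt_le_mono) simp
  then show ?thesis by (simp add: hex_y_def)
qed

lemma abs_divide_hex_y_le: "\<bar>v / hex_y\<bar> \<le> 2 * \<bar>v\<bar>"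
proof -
  have "\<bar>v\<bar> * 1 \<le> \<bar>v\<bar> * (2 * hex_y)" using hex_y_ge_half by (intro mult_left_mono) auto
  then show ?thesis using hex_y_pos by (simp add: abs_divide divide_le_eq mult_ac)
qed

text \<open>\<open>hex_form m n = |m + n\<omega>|\<^sup>2\<close> with \<open>\<omega> = 1/2 + i hex_y\<close>, and \<open>hex_re m n\<close> is the real part
  of \<open>m + n\<omega>\<close>. Moving \<open>\<omega>\<close> to \<open>\<omega> + u + iv\<close> turns the form into \<open>pert_form u v\<close>.\<close>

definition hex_re :: "int \<Rightarrow> int \<Rightarrow> real" where "hex_re m n = real_of_int m + real_of_int n / 2"

definition pert_lin :: "real \<Rightarrow> real \<Rightarrow> int \<Rightarrow> int \<Rightarrow> real" where
  "pert_lin u v m n = 2 * u * (hex_re m n * real_of_int n) + 2 * hex_y * v * (real_of_int n)^2"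

definition pert_quad :: "real \<Rightarrow> real \<Rightarrow> int \<Rightarrow> int \<Rightarrow> real" where
  "pert_quad u v m n = (u^2 + v^2) * (real_of_int n)^2"

definition pert_form :: "real \<Rightarrow> real \<Rightarrow> int \<Rightarrow> int \<Rightarrow> real" where
  "pert_form u v m n = (hex_re m n + u * real_of_int n)^2 + (hex_y + v)^2 * (real_of_int n)^2"

lemma hex_form_eq_hex_re: "hex_form m n = (hex_re m n)^2 + 3/4 * (real_of_int n)^2"
  by (simp add: hex_form_def hex_re_def power2_eq_square algebra_simps)

lemma pert_form_eq: "pert_form u v m n = hex_form m n + pert_lin u v m n + pert_quad u v m n"
proof -
  have "pert_form u v m n = (hex_re m n)^2 + hex_y^2 * (real_of_int n)^2 + pert_lin u v m n + pert_quad u v m n"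
    unfolding pert_form_def pert_lin_def pert_quad_def by (simp add: power2_eq_square algebra_simps)
  then show ?thesis using hex_y_sq hex_form_eq_hex_re by simp
qed

lemma sq_le_hex_form: "(real_of_int n)^2 \<le> 4/3 * hex_form m n"
  using hex_form_eq_hex_re[of m n] zero_le_power2[of "hex_re m n"] by linarith

lemma abs_hex_re_mult_le: "\<bar>hex_re m n * real_of_int n\<bar> \<le> 2 * hex_form m n"
proof -
  define a b where "a = \<bar>hex_re m n\<bar>" and "b = \<bar>real_of_int n\<bar>"
  have "0 \<le> (a - b)^2" by simp
  also have "(a - b)^2 = a^2 - 2 * (a * b) + b^2" by (simp add: power2_diff)
  finally have "2 * (a * b) \<le> a^2 + b^2" by linarith
  moreover have "a^2 = (hex_re m n)^2" "b^2 = (real_of_int n)^2" "a * b = \<bar>hex_re m n * real_of_int n\<bar>"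
    unfolding a_def b_def by (simp_all add: abs_mult)
  ultimately have "2 * \<bar>hex_re m n * real_of_int n\<bar> \<le> (hex_re m n)^2 + (real_of_int n)^2" by simp
  then show ?thesis using hex_form_eq_hex_re[of m n] sq_le_hex_form[of n m] zero_le_power2[of "hex_re m n"] by linarith
qed

lemma pert_lin_bound:
  assumes "(m,n) \<in> Zstar"
  shows "\<bar>pert_lin u v m n\<bar> \<le> 4 * hex_form m n * (\<bar>u\<bar> + \<bar>v\<bar>)"
proof -
  have q: "hex_form m n > 0" using hex_form_pos[OF assms] .
  have "\<bar>2 * u * (hex_re m n * real_of_int n)\<bar> = (2 * \<bar>u\<bar>) * \<bar>hex_re m n * real_of_int n\<bar>"
    by (simp add: abs_mult)
  also have "\<dots> \<le> (2 * \<bar>u\<bar>) * (2 * hex_form m n)" by (intro mult_left_mono abs_hex_re_mult_le) simp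
  finally have a: "\<bar>2 * u * (hex_re m n * real_of_int n)\<bar> \<le> 4 * hex_form m n * \<bar>u\<bar>" by (simp add: mult_ac)
  have "\<bar>2 * hex_y * v * (real_of_int n)^2\<bar> = 2 * hex_y * \<bar>v\<bar> * (real_of_int n)^2"
    using hex_y_pos by (simp add: abs_mult)
  also have "\<dots> \<le> 2 * 1 * \<bar>v\<bar> * (4/3 * hex_form m n)"
    by (intro mult_mono sq_le_hex_form) (use hex_y_le_1 hex_y_pos in auto)
  finally have b: "\<bar>2 * hex_y * v * (real_of_int n)^2\<bar> \<le> 8/3 * hex_form m n * \<bar>v\<bar>" by (simp add: mult_ac)
  have "\<bar>pert_lin u v m n\<bar> \<le> 4 * hex_form m n * \<bar>u\<bar> + 8/3 * hex_form m n * \<bar>v\<bar>"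
    unfolding pert_lin_def using a b by linarith
  also have "\<dots> \<le> 4 * hex_form m n * (\<bar>u\<bar> + \<bar>v\<bar>)" using q by (simp add: algebra_simps)
  finally show ?thesis .
qed

lemma pert_quad_bound:
  assumes "(m,n) \<in> Zstar"
  shows "\<bar>pert_quad u v m n\<bar> \<le> 2 * hex_form m n * (\<bar>u\<bar> + \<bar>v\<bar>)^2"
proof -
  have q: "hex_form m n > 0" using hex_form_pos[OF assms] .
  have r: "u^2 + v^2 \<le> (\<bar>u\<bar> + \<bar>v\<bar>)^2" by (simp add: power2_eq_square algebra_simps)
  have "\<bar>pert_quad u v m n\<bar> = (u^2 + v^2) * (real_of_int n)^2" by (simp add: pert_quad_def)
  also have "\<dots> \<le> (\<bar>u\<bar> + \<bar>v\<bar>)^2 * (4/3 * hex_form m n)"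
    by (intro mult_mono r sq_le_hex_form) auto
  also have "\<dots> \<le> 2 * hex_form m n * (\<bar>u\<bar> + \<bar>v\<bar>)^2" using q by simp
  finally show ?thesis .
qed

text \<open>\<open>pert_main t u v\<close> is the second-order Taylor approximation
  \<open>Q\<^sup>-\<^sup>t (1 - t e + t(t+1)/2 (pert_lin/Q)\<^sup>2)\<close> of \<open>pert_form\<^sup>-\<^sup>t = (Q (1 + e))\<^sup>-\<^sup>t\<close>, where
  \<open>Q = hex_form\<close> and \<open>e = (pert_lin + pert_quad)/Q\<close>, written as a quartic form over \<open>Q\<^sup>t\<^sup>+\<^sup>2\<close>;
  \<open>pert_coeff t u v k\<close> is the coefficient of \<open>m\<^sup>4\<^sup>-\<^sup>k n\<^sup>k\<close>.\<close>

definition pert_coeff :: "real \<Rightarrow> real \<Rightarrow> real \<Rightarrow> nat \<Rightarrow> real" where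
  "pert_coeff t u v k = (if k = 0 then 1
     else if k = 1 then 2 - 2*t* u
     else if k = 2 then 3 - t*(3* u + 2*hex_y* v + (u^2+v^2)) + 2*t*(t+1)* u^2
     else if k = 3 then 2 - t*(3* u + 2*hex_y* v + (u^2+v^2)) + t*(t+1)/2*(4* u^2 + 8*hex_y* u* v)
     else 1 - t*(u + 2*hex_y* v + (u^2+v^2)) + t*(t+1)/2*(u^2 + 4*hex_y* u* v + 4*hex_y^2* v^2))"

definition pert_main :: "real \<Rightarrow> real \<Rightarrow> real \<Rightarrow> int \<times> int \<Rightarrow> real" where
  "pert_main t u v = (\<lambda>(m,n). hex_form m n powr (- (t+2)) * (pert_coeff t u v 0 * real_of_int m ^ 4
     + pert_coeff t u v 1 * real_of_int m ^ 3 * real_of_int n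
     + pert_coeff t u v 2 * real_of_int m ^ 2 * real_of_int n ^ 2 + pert_coeff t u v 3 * real_of_int m * real_of_int n ^ 3
     + pert_coeff t u v 4 * real_of_int n ^ 4))"

lemma pert_quartic_expand:
  "hex_form m n ^ 2 - t * hex_form m n * (pert_lin u v m n + pert_quad u v m n) + t*(t+1)/2 * (pert_lin u v m n)^2
   = pert_coeff t u v 0 * real_of_int m ^ 4 + pert_coeff t u v 1 * real_of_int m ^ 3 * real_of_int n
     + pert_coeff t u v 2 * real_of_int m ^ 2 * real_of_int n ^ 2 + pert_coeff t u v 3 * real_of_int m * real_of_int n ^ 3
     + pert_coeff t u v 4 * real_of_int n ^ 4"
  unfolding pert_coeff_def hex_form_def pert_lin_def pert_quad_def hex_re_def
  by (simp add: power2_eq_square power3_eq_cube power4_eq_xxxx field_simps)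

lemma pert_main_eq:
  assumes z: "(m,n) \<in> Zstar"
  shows "hex_form m n powr (- t) * (1 - t * ((pert_lin u v m n + pert_quad u v m n) / hex_form m n) + t*(t+1)/2 * (pert_lin u v m n / hex_form m n)^2)
         = pert_main t u v (m,n)"
proof -
  have q: "hex_form m n > 0" using hex_form_pos[OF z] .
  have pw: "hex_form m n powr (- t) = hex_form m n powr (- (t+2)) * hex_form m n ^ 2"
    using hex_form_powr_mult_sq[OF z, of "t+2"] by simp
  have "hex_form m n ^ 2 * (1 - t * ((pert_lin u v m n + pert_quad u v m n) / hex_form m n) + t*(t+1)/2 * (pert_lin u v m n / hex_form m n)^2)
        = hex_form m n ^ 2 - t * hex_form m n * (pert_lin u v m n + pert_quad u v m n) + t*(t+1)/2 * (pert_lin u v m n)^2"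
    using q by (simp add: field_simps power2_eq_square)
  then show ?thesis unfolding pert_main_def using pert_quartic_expand[of m n t u v] pw by (simp add: mult.assoc)
qed

lemma pert_form_ge_half:
  assumes r: "\<bar>u\<bar> + \<bar>v\<bar> \<le> 1/12" and z: "(m,n) \<in> Zstar"
  shows "pert_form u v m n \<ge> hex_form m n / 2"
proof -
  define r where "r = \<bar>u\<bar> + \<bar>v\<bar>"
  have q: "hex_form m n > 0" using hex_form_pos[OF z] .
  have r0: "0 \<le> r" "r \<le> 1/12" using assms unfolding r_def by auto
  have lin: "\<bar>pert_lin u v m n\<bar> \<le> hex_form m n * (4 * r)"
    using pert_lin_bound[OF z, of u v] unfolding r_def by (simp add: mult_ac)
  have "r^2 \<le> r" using r0 by (simp add: power2_eq_square mult_left_le)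
  then have "2 * hex_form m n * r^2 \<le> 2 * hex_form m n * r" using q by (intro mult_left_mono) auto
  then have quad: "\<bar>pert_quad u v m n\<bar> \<le> hex_form m n * (2 * r)"
    using pert_quad_bound[OF z, of u v] unfolding r_def[symmetric] by (simp add: mult_ac)
  have "hex_form m n * (4 * r) + hex_form m n * (2 * r) \<le> hex_form m n * (1/2)"
    using q r0 by (simp add: distrib_left[symmetric] mult_left_mono)
  then show ?thesis unfolding pert_form_eq using lin quad by linarith
qed

lemma summable_on_pert_form_powr:
  assumes t: "t > 1" and r: "\<bar>u\<bar> + \<bar>v\<bar> \<le> 1/12"
  shows "(\<lambda>(m,n). pert_form u v m n powr (- t)) summable_on Zstar"
proof (rule summable_on_Zstar_of_hex_bound[OF t])
  fix m n :: int assume z: "(m,n) \<in> Zstar"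
  have q: "hex_form m n > 0" using hex_form_pos[OF z] .
  have "pert_form u v m n powr (- t) \<le> (hex_form m n / 2) powr (- t)"
    using pert_form_ge_half[OF r z] q t by (intro powr_mono2') auto
  also have "\<dots> = 2 powr t * hex_form m n powr (- t)"
    using q by (simp add: powr_divide powr_minus field_simps)
  finally show "\<bar>(\<lambda>(m,n). pert_form u v m n powr (- t)) (m,n)\<bar> \<le> 2 powr t * hex_form m n powr (- t)"
    by simp
qed

definition pert_sum :: "real \<Rightarrow> real \<Rightarrow> real \<Rightarrow> real" where
  "pert_sum t u v = infsum (\<lambda>(m,n). pert_form u v m n powr (- t)) Zstar"

lemma abs_pert_sum_le:
  assumes t: "t > 1" and r: "\<bar>u\<bar> + \<bar>v\<bar> \<le> 1/12"
  shows "\<bar>pert_sum t u v\<bar> \<le> 2 powr t * infsum (\<lambda>(m,n). hex_form m n powr (- t)) Zstar"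
proof -
  have "pert_sum t u v \<le> infsum (\<lambda>x. 2 powr t * (case x of (m,n) \<Rightarrow> hex_form m n powr (- t))) Zstar"
    unfolding pert_sum_def
  proof (rule infsum_mono)
    show "(\<lambda>(m,n). pert_form u v m n powr (- t)) summable_on Zstar"
      by (rule summable_on_pert_form_powr[OF t r])
    show "(\<lambda>x. 2 powr t * (case x of (m,n) \<Rightarrow> hex_form m n powr (- t))) summable_on Zstar"
      by (rule summable_on_cmult_right[OF summable_on_hex_form_powr[OF t]])
    fix x assume "x \<in> Zstar"
    then obtain m n where x: "x = (m,n)" "(m,n) \<in> Zstar" by (cases x) auto
    have q: "hex_form m n > 0" using hex_form_pos[OF x(2)] .
    have "pert_form u v m n powr (- t) \<le> (hex_form m n / 2) powr (- t)"
      using pert_form_ge_half[OF r x(2)] q t by (intro powr_mono2') auto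
    also have "\<dots> = 2 powr t * hex_form m n powr (- t)"
      using q by (simp add: powr_divide powr_minus field_simps)
    finally show "(\<lambda>(m,n). pert_form u v m n powr (- t)) x \<le> 2 powr t * (case x of (m,n) \<Rightarrow> hex_form m n powr (- t))"
      using x by simp
  qed
  moreover have "pert_sum t u v \<ge> 0" unfolding pert_sum_def by (rule infsum_nonneg) auto
  ultimately show ?thesis
    using infsum_cmult_right[OF summable_on_hex_form_powr[OF t], of "2 powr t"]
    by (simp add: case_prod_unfold)
qed

lemma powr_second_order_approx:
  fixes t :: real
  assumes t: "t > 1"
  obtains K where "K \<ge> 0" "\<And>r a b. 0 \<le> r \<Longrightarrow> r \<le> 1/12 \<Longrightarrow> \<bar>a\<bar> \<le> 4 * r \<Longrightarrow> \<bar>b\<bar> \<le> 2 * r^2 \<Longrightarrow>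
      \<bar>(1 + (a + b)) powr (- t) - (1 - t * (a + b) + t*(t+1)/2 * a^2)\<bar> \<le> K * r^3"
proof -
  obtain KT where KT0: "KT \<ge> 0" and KT: "\<And>e. \<bar>e\<bar> \<le> 1/2 \<Longrightarrow>
      \<bar>(1 + e) powr (- t) - (1 + (- t) * e + (- t) * ((- t) - 1) / 2 * e^2)\<bar> \<le> KT * \<bar>e\<bar>^3"
    using taylor2_one_plus_powr[of "- t"] by blast
  have "\<bar>(1 + (a + b)) powr (- t) - (1 - t * (a + b) + t*(t+1)/2 * a^2)\<bar> \<le> (216 * KT + 10 * t * (t + 1)) * r^3"
    if r: "0 \<le> r" "r \<le> 1/12" and ha: "\<bar>a\<bar> \<le> 4 * r" and hb: "\<bar>b\<bar> \<le> 2 * r^2" for r a b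
  proof -
    define e where "e = a + b"
    have rsq: "r^2 \<le> r" using r by (simp add: power2_eq_square mult_left_le)
    have he: "\<bar>e\<bar> \<le> 6 * r" unfolding e_def using ha hb rsq by linarith
    then have he2: "\<bar>e\<bar> \<le> 1/2" using r by linarith
    have "\<bar>e\<bar>^3 \<le> (6 * r)^3" by (rule power_mono[OF he]) simp
    then have taylor: "\<bar>(1 + e) powr (- t) - (1 - t * e + t*(t+1)/2 * e^2)\<bar> \<le> KT * 216 * r^3"
      using KT[OF he2] KT0 mult_left_mono[of "\<bar>e\<bar>^3" "216 * r^3" KT]
      by (simp add: algebra_simps power_mult_distrib)
    \<comment> \<open>replacing \<open>e\<^sup>2\<close> by \<open>a\<^sup>2\<close> costs only a cubic error since \<open>b = O(r\<^sup>2)\<close>\<close>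
    have "\<bar>e^2 - a^2\<bar> = \<bar>b\<bar> * \<bar>2 * a + b\<bar>"
      unfolding e_def by (simp add: power2_eq_square algebra_simps flip: abs_mult)
    also have "\<dots> \<le> (2 * r^2) * (10 * r)"
      by (intro mult_mono hb) (use ha hb rsq in auto)
    finally have sq: "\<bar>e^2 - a^2\<bar> \<le> 20 * r^3" by (simp add: power2_eq_square power3_eq_cube)
    have "(1 + e) powr (- t) - (1 - t * e + t*(t+1)/2 * a^2)
        = ((1 + e) powr (- t) - (1 - t * e + t*(t+1)/2 * e^2)) + t*(t+1)/2 * (e^2 - a^2)"
      by (simp add: algebra_simps)
    then have "\<bar>(1 + e) powr (- t) - (1 - t * e + t*(t+1)/2 * a^2)\<bar>
        \<le> \<bar>(1 + e) powr (- t) - (1 - t * e + t*(t+1)/2 * e^2)\<bar> + t*(t+1)/2 * \<bar>e^2 - a^2\<bar>"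
      using abs_triangle_ineq[of "(1 + e) powr (- t) - (1 - t * e + t*(t+1)/2 * e^2)" "t*(t+1)/2 * (e^2 - a^2)"] t
      by (simp add: abs_mult)
    also have "\<dots> \<le> KT * 216 * r^3 + t*(t+1)/2 * (20 * r^3)"
      using taylor sq t by (intro add_mono mult_left_mono) auto
    also have "\<dots> = (216 * KT + 10 * t * (t + 1)) * r^3" by (simp add: algebra_simps)
    finally show ?thesis unfolding e_def .
  qed
  then show ?thesis using that[of "216 * KT + 10 * t * (t + 1)"] KT0 t by simp
qed

lemma pert_term_approx:
  fixes t :: real
  assumes t: "t > 1"
  obtains K where "K \<ge> 0" "\<And>u v m n. \<bar>u\<bar> + \<bar>v\<bar> \<le> 1/12 \<Longrightarrow> (m,n) \<in> Zstar \<Longrightarrow>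
      \<bar>pert_form u v m n powr (- t) - pert_main t u v (m,n)\<bar> \<le> K * (\<bar>u\<bar> + \<bar>v\<bar>)^3 * hex_form m n powr (- t)"
proof -
  obtain K where K0: "K \<ge> 0" and K: "\<And>r a b. 0 \<le> r \<Longrightarrow> r \<le> 1/12 \<Longrightarrow> \<bar>a\<bar> \<le> 4 * r \<Longrightarrow> \<bar>b\<bar> \<le> 2 * r^2 \<Longrightarrow>
      \<bar>(1 + (a + b)) powr (- t) - (1 - t * (a + b) + t*(t+1)/2 * a^2)\<bar> \<le> K * r^3"
    using powr_second_order_approx[OF t] by blast
  have "\<bar>pert_form u v m n powr (- t) - pert_main t u v (m,n)\<bar> \<le> K * (\<bar>u\<bar> + \<bar>v\<bar>)^3 * hex_form m n powr (- t)"
    if r: "\<bar>u\<bar> + \<bar>v\<bar> \<le> 1/12" and z: "(m,n) \<in> Zstar" for u v m n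
  proof -
    define q where "q = hex_form m n"
    define a where "a = pert_lin u v m n / q"
    define b where "b = pert_quad u v m n / q"
    have q0: "q > 0" unfolding q_def using hex_form_pos[OF z] .
    have ha: "\<bar>a\<bar> \<le> 4 * (\<bar>u\<bar> + \<bar>v\<bar>)"
      using pert_lin_bound[OF z, of u v] q0 unfolding a_def q_def by (simp add: divide_le_eq abs_divide mult_ac)
    have hb: "\<bar>b\<bar> \<le> 2 * (\<bar>u\<bar> + \<bar>v\<bar>)^2"
      using pert_quad_bound[OF z, of u v] q0 unfolding b_def q_def by (simp add: divide_le_eq abs_divide mult_ac)
    have "pert_form u v m n = q * (1 + (a + b))"
      unfolding a_def b_def using q0 pert_form_eq[of u v m n] by (simp add: field_simps q_def)
    then have "pert_form u v m n powr (- t) = q powr (- t) * (1 + (a + b)) powr (- t)"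
      using q0 pert_form_ge_half[OF r z] by (simp add: powr_mult q_def)
    moreover have "pert_main t u v (m,n) = q powr (- t) * (1 - t * (a + b) + t*(t+1)/2 * a^2)"
      using pert_main_eq[OF z, of t u v] unfolding q_def a_def b_def by (simp add: add_divide_distrib)
    ultimately have "\<bar>pert_form u v m n powr (- t) - pert_main t u v (m,n)\<bar>
        = q powr (- t) * \<bar>(1 + (a + b)) powr (- t) - (1 - t * (a + b) + t*(t+1)/2 * a^2)\<bar>"
      by (simp add: abs_mult right_diff_distrib[symmetric])
    also have "\<dots> \<le> q powr (- t) * (K * (\<bar>u\<bar> + \<bar>v\<bar>)^3)"
      using K[OF _ r ha hb] by (intro mult_left_mono) auto
    finally show ?thesis unfolding q_def by (simp add: mult_ac)
  qed
  then show ?thesis using that K0 by blast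
qed

definition pert_mu :: "real \<Rightarrow> real \<Rightarrow> real \<Rightarrow> real" where
  "pert_mu t u v = pert_coeff t u v 0 - pert_coeff t u v 1 / 2 + pert_coeff t u v 2 / 2
     - pert_coeff t u v 3 / 2 + pert_coeff t u v 4"

lemma pert_mu_eq: "pert_mu t u v = 3/2 - 2*t*hex_y * v - t*(u^2+v^2) + t*(t+1)/2*(u^2 + 3 * v^2)"
proof -
  have "pert_mu t u v = 3/2 - 2*t*hex_y * v - t*(u^2+v^2) + t*(t+1)/2*(u^2 + 4*hex_y^2 * v^2)"
    unfolding pert_mu_def pert_coeff_def by (simp add: field_simps power2_eq_square)
  then show ?thesis using hex_y_sq by simp
qed

lemma infsum_pert_main: "t > 1 \<Longrightarrow> infsum (pert_main t u v) Zstar = S1 (t+2) * pert_mu t u v"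
  unfolding pert_main_def pert_mu_def by (rule infsum_hex_quartic) simp

lemma pert_sum_expansion:
  assumes t: "t > 1"
  shows "cubic_near_zero (\<lambda>u v. pert_sum t u v - S1 (t+2) * pert_mu t u v)"
proof -
  obtain K where K0: "K \<ge> 0" and K: "\<And>u v m n. \<bar>u\<bar> + \<bar>v\<bar> \<le> 1/12 \<Longrightarrow> (m,n) \<in> Zstar \<Longrightarrow>
      \<bar>pert_form u v m n powr (- t) - pert_main t u v (m,n)\<bar> \<le> K * (\<bar>u\<bar> + \<bar>v\<bar>)^3 * hex_form m n powr (- t)"
    using pert_term_approx[OF t] by blast
  note W = summable_on_hex_form_powr[OF t]
  show ?thesis
  proof (rule cubic_near_zeroI[of _ "K * infsum (\<lambda>(m,n). hex_form m n powr (- t)) Zstar"])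
    fix u v :: real assume r: "\<bar>u\<bar> + \<bar>v\<bar> \<le> 1/12"
    define R where "R = (\<lambda>x. (\<lambda>(m,n). pert_form u v m n powr (- t)) x - pert_main t u v x)"
    define B where "B = K * (\<bar>u\<bar> + \<bar>v\<bar>)^3"
    have Rb: "norm (R x) \<le> B * (case x of (m,n) \<Rightarrow> hex_form m n powr (- t))" if "x \<in> Zstar" for x
      using K[OF r] that unfolding R_def B_def by (cases x) auto
    have Rs: "R summable_on Zstar"
      by (rule summable_on_Zstar_of_hex_bound[OF t]) (use Rb in auto)
    have Ms: "pert_main t u v summable_on Zstar"
      unfolding pert_main_def by (rule summable_on_hex_quartic) (use t in simp)
    have "pert_sum t u v = infsum (pert_main t u v) Zstar + infsum R Zstar"
      unfolding pert_sum_def R_def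
      by (subst infsum_add[OF Ms Rs, unfolded R_def, symmetric]) simp
    then have "pert_sum t u v - S1 (t+2) * pert_mu t u v = infsum R Zstar"
      using infsum_pert_main[OF t] by simp
    also have "\<bar>infsum R Zstar\<bar> \<le> infsum (\<lambda>x. norm (R x)) Zstar"
      using norm_infsum_bound[of R Zstar] Rs summable_on_iff_abs_summable_on_real by auto
    also have "\<dots> \<le> infsum (\<lambda>x. B * (case x of (m,n) \<Rightarrow> hex_form m n powr (- t))) Zstar"
    proof (rule infsum_mono)
      show "(\<lambda>x. norm (R x)) summable_on Zstar"
        using Rs summable_on_iff_abs_summable_on_real by blast
    qed (use Rb summable_on_cmult_right[OF W] in auto)
    also have "\<dots> = B * infsum (\<lambda>(m,n). hex_form m n powr (- t)) Zstar"
      by (rule infsum_cmult_right[OF W])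
    finally show "\<bar>pert_sum t u v - S1 (t+2) * pert_mu t u v\<bar>
        \<le> K * infsum (\<lambda>(m,n). hex_form m n powr (- t)) Zstar * (\<bar>u\<bar> + \<bar>v\<bar>)^3"
      unfolding B_def by (simp add: mult_ac)
  qed
qed

text \<open>Rescaling by the Taylor polynomial of \<open>(1 + v/hex_y)\<^sup>t\<close> exactly removes the term of
  \<open>pert_mu\<close> that is linear in \<open>v\<close>; only cubic terms survive besides the quadratic form.\<close>

lemma pert_mu_rescaled_eq:
  fixes t u v :: real
  defines "w \<equiv> v / hex_y" and "m1 \<equiv> - 2*t*hex_y * v"
    and "m2 \<equiv> - t*(u^2+v^2) + t*(t+1)/2*(u^2 + 3 * v^2)"
  shows "(1 + t*w + t*(t-1)/2*w^2) * pert_mu t u v - (3/2 + t*(t-1)/2*(u^2+v^2))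
      = t*w*m2 + t*(t-1)/2*w^2*(m1+m2)"
proof -
  have mu: "pert_mu t u v = 3/2 + m1 + m2" unfolding m1_def m2_def pert_mu_eq by simp
  have wy: "w * hex_y = v" unfolding w_def using hex_y_pos by simp
  have w2: "w^2 = 4/3 * v^2" unfolding w_def power_divide hex_y_sq by simp
  have w1: "w = 4/3 * hex_y * v" unfolding w_def using hex_y_sq hex_y_pos
    by (simp add: field_simps power2_eq_square)
  have e1: "m1 + 3/2*t*w = 0" unfolding m1_def w1 by (simp add: algebra_simps)
  have twm1: "t*w*m1 = -2*t^2 * v^2" unfolding m1_def using wy
    by (simp add: algebra_simps power2_eq_square)
  have e2: "m2 + t*w*m1 + 3/4*t*(t-1)*w^2 = t*(t-1)/2*(u^2+v^2)"
    unfolding twm1 w2 m2_def by (simp add: field_simps power2_eq_square)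
  have "(1 + t*w + t*(t-1)/2*w^2) * (3/2 + m1 + m2)
     = 3/2 + (m1 + 3/2*t*w) + (m2 + t*w*m1 + 3/4*t*(t-1)*w^2) + t*w*m2 + t*(t-1)/2*w^2*(m1+m2)"
    by algebra
  then show ?thesis unfolding mu e1 e2 by simp
qed

lemma abs_pert_mu_quadratic_le:
  fixes t u v :: real
  assumes t: "t > 1"
  shows "\<bar>- t*(u^2+v^2) + t*(t+1)/2*(u^2 + 3 * v^2)\<bar> \<le> (t + 3*t*(t+1)/2) * (\<bar>u\<bar> + \<bar>v\<bar>)^2"
proof -
  have "(\<bar>u\<bar> + \<bar>v\<bar>)^2 = u^2 + v^2 + 2*(\<bar>u\<bar>*\<bar>v\<bar>)" by (simp add: power2_sum power2_abs)
  then have r2: "u^2 + v^2 \<le> (\<bar>u\<bar> + \<bar>v\<bar>)^2" by simp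
  then have r2': "u^2 + 3 * v^2 \<le> 3 * (\<bar>u\<bar> + \<bar>v\<bar>)^2" using zero_le_power2[of u] by linarith
  have "0 \<le> t*(u^2+v^2)" "0 \<le> t*(t+1)/2*(u^2 + 3 * v^2)" using t by simp_all
  then have "\<bar>- t*(u^2+v^2) + t*(t+1)/2*(u^2 + 3 * v^2)\<bar> \<le> t*(u^2+v^2) + t*(t+1)/2*(u^2 + 3 * v^2)"
    by linarith
  also have "\<dots> \<le> t*(\<bar>u\<bar> + \<bar>v\<bar>)^2 + t*(t+1)/2*(3 * (\<bar>u\<bar> + \<bar>v\<bar>)^2)"
    using t r2 r2' by (intro add_mono mult_left_mono) auto
  finally show ?thesis by (simp add: algebra_simps)
qed

lemma pert_mu_rescaled_expansion:
  assumes t: "t > 1"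
  shows "cubic_near_zero (\<lambda>u v. (1 + t*(v/hex_y) + t*(t-1)/2*(v/hex_y)^2) * pert_mu t u v
                                  - (3/2 + t*(t-1)/2*(u^2+v^2)))"
proof -
  define c2 where "c2 = t + 3*t*(t+1)/2"
  have c20: "c2 \<ge> 0" unfolding c2_def using t by simp
  show ?thesis
  proof (rule cubic_near_zeroI[of _ "2*t*c2 + 2*t*(t-1)*(2*t + c2)"])
    fix u v :: real assume r: "\<bar>u\<bar> + \<bar>v\<bar> \<le> 1/12"
    define r1 where "r1 = \<bar>u\<bar> + \<bar>v\<bar>"
    define w where "w = v / hex_y"
    define m1 where "m1 = - 2*t*hex_y * v"
    define m2 where "m2 = - t*(u^2+v^2) + t*(t+1)/2*(u^2 + 3 * v^2)"
    have r10: "0 \<le> r1" "r1 \<le> 1" using r unfolding r1_def by auto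
    have vr: "\<bar>v\<bar> \<le> r1" "\<bar>u\<bar> \<le> r1" unfolding r1_def by auto
    have hw: "\<bar>w\<bar> \<le> 2 * r1" using abs_divide_hex_y_le[of v] vr unfolding w_def by linarith
    have hm2: "\<bar>m2\<bar> \<le> c2 * r1^2"
      unfolding m2_def c2_def r1_def by (rule abs_pert_mu_quadratic_le[OF t])
    have hm1: "\<bar>m1\<bar> \<le> 2*t*r1"
    proof -
      have "\<bar>m1\<bar> = 2*t*hex_y * \<bar>v\<bar>" unfolding m1_def using t hex_y_pos by (simp add: abs_mult)
      also have "\<dots> \<le> 2*t*1*r1" using t hex_y_le_1 hex_y_pos vr by (intro mult_mono) auto
      finally show ?thesis by simp
    qed
    have r1sq: "r1^2 \<le> r1" using r10 mult_left_le[of r1 r1] by (simp add: power2_eq_square)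
    have hm12: "\<bar>m1 + m2\<bar> \<le> (2*t + c2) * r1"
    proof -
      have "c2 * r1^2 \<le> c2 * r1" using c20 r1sq by (rule mult_left_mono[rotated])
      moreover have "\<bar>m1 + m2\<bar> \<le> \<bar>m1\<bar> + \<bar>m2\<bar>" by (rule abs_triangle_ineq)
      ultimately have "\<bar>m1 + m2\<bar> \<le> 2*t*r1 + c2 * r1" using hm1 hm2 by linarith
      then show ?thesis by (simp add: algebra_simps)
    qed
    have "\<bar>t*w*m2\<bar> \<le> t*(2*r1)*(c2*r1^2)"
      unfolding abs_mult using t hw hm2 by (intro mult_mono) auto
    moreover have "\<bar>t*(t-1)/2*w^2*(m1+m2)\<bar> \<le> t*(t-1)/2*(4*r1^2)*((2*t + c2) * r1)"
    proof -
      have "\<bar>w\<bar>^2 \<le> (2*r1)^2" using hw by (intro power_mono) auto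
      then have "\<bar>w^2\<bar> \<le> 4*r1^2" by (simp add: power_mult_distrib)
      then show ?thesis unfolding abs_mult using t hm12 c20 r10
        by (intro mult_mono) (auto simp: mult_nonneg_nonneg)
    qed
    ultimately have "\<bar>t*w*m2 + t*(t-1)/2*w^2*(m1+m2)\<bar>
        \<le> t*(2*r1)*(c2*r1^2) + t*(t-1)/2*(4*r1^2)*((2*t + c2) * r1)"
      using abs_triangle_ineq[of "t*w*m2" "t*(t-1)/2*w^2*(m1+m2)"] by linarith
    also have "\<dots> = (2*t*c2 + 2*t*(t-1)*(2*t + c2)) * r1^3"
      by (simp add: field_simps power2_eq_square power3_eq_cube)
    moreover have "(1 + t*(v/hex_y) + t*(t-1)/2*(v/hex_y)^2) * pert_mu t u v - (3/2 + t*(t-1)/2*(u^2+v^2))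
        = t*w*m2 + t*(t-1)/2*w^2*(m1+m2)"
      unfolding w_def m1_def m2_def by (rule pert_mu_rescaled_eq)
    ultimately show "\<bar>(1 + t*(v/hex_y) + t*(t-1)/2*(v/hex_y)^2) * pert_mu t u v - (3/2 + t*(t-1)/2*(u^2+v^2))\<bar>
        \<le> (2*t*c2 + 2*t*(t-1)*(2*t + c2)) * (\<bar>u\<bar> + \<bar>v\<bar>)^3"
      unfolding r1_def by simp
  qed
qed

section \<open>The Epstein zeta function near the hexagonal lattice\<close>

definition epstein_term :: "real \<Rightarrow> real \<Rightarrow> real \<Rightarrow> int \<times> int \<Rightarrow> real" where
  "epstein_term t x y = (\<lambda>(m,n). ((real_of_int m + x * real_of_int n)^2 / y + y * (real_of_int n)^2) powr (- t))"

definition epstein_zeta :: "real \<Rightarrow> real \<Rightarrow> real \<Rightarrow> real" where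
  "epstein_zeta t x y = infsum (epstein_term t x y) Zstar"

lemma hex_y_plus_pos: "\<bar>u\<bar> + \<bar>v\<bar> \<le> 1/12 \<Longrightarrow> hex_y + v > 0"
  using hex_y_ge_half by linarith

lemma epstein_term_pert:
  assumes r: "\<bar>u\<bar> + \<bar>v\<bar> \<le> 1/12" and z: "(m,n) \<in> Zstar"
  shows "epstein_term t (1/2 + u) (hex_y + v) (m,n) = (hex_y + v) powr t * pert_form u v m n powr (- t)"
proof -
  have y: "hex_y + v > 0" by (rule hex_y_plus_pos[OF r])
  have P: "pert_form u v m n > 0"
    using pert_form_ge_half[OF r z] hex_form_pos[OF z] by linarith
  have "(real_of_int m + (1/2 + u) * real_of_int n)^2 / (hex_y + v) + (hex_y + v) * (real_of_int n)^2
      = pert_form u v m n / (hex_y + v)"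
    using y unfolding pert_form_def hex_re_def by (simp add: field_simps power2_eq_square)
  moreover have "(pert_form u v m n / (hex_y + v)) powr (- t) = (hex_y + v) powr t * pert_form u v m n powr (- t)"
    using y P by (simp add: powr_divide powr_minus field_simps)
  ultimately show ?thesis unfolding epstein_term_def by simp
qed

lemma summable_on_epstein_term_pert:
  assumes t: "t > 1" and r: "\<bar>u\<bar> + \<bar>v\<bar> \<le> 1/12"
  shows "epstein_term t (1/2 + u) (hex_y + v) summable_on Zstar"
proof -
  have "(\<lambda>x. (hex_y + v) powr t * (case x of (m,n) \<Rightarrow> pert_form u v m n powr (- t))) summable_on Zstar"
    by (rule summable_on_cmult_right[OF summable_on_pert_form_powr[OF t r]])
  then show ?thesis
    by (rule summable_on_cong[THEN iffD1, rotated]) (auto simp: epstein_term_pert[OF r])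
qed

lemma epstein_zeta_pert_eq:
  assumes r: "\<bar>u\<bar> + \<bar>v\<bar> \<le> 1/12"
  shows "epstein_zeta t (1/2 + u) (hex_y + v) = hex_y powr t * ((1 + v / hex_y) powr t * pert_sum t u v)"
proof -
  have "epstein_zeta t (1/2 + u) (hex_y + v)
      = infsum (\<lambda>x. (hex_y + v) powr t * (case x of (m,n) \<Rightarrow> pert_form u v m n powr (- t))) Zstar"
    unfolding epstein_zeta_def by (rule infsum_cong) (auto simp: epstein_term_pert[OF r])
  also have "\<dots> = (hex_y + v) powr t * pert_sum t u v"
    unfolding pert_sum_def by (rule infsum_cmult_right') 
  also have "(hex_y + v) powr t = hex_y powr t * (1 + v / hex_y) powr t"
  proof -
    have "hex_y + v = hex_y * (1 + v / hex_y)" using hex_y_pos by (simp add: field_simps)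
    moreover have "1 + v / hex_y > 0"
      using hex_y_pos hex_y_plus_pos[OF r] by (simp add: field_simps)
    ultimately show ?thesis using hex_y_pos by (simp add: powr_mult)
  qed
  finally show ?thesis by simp
qed

lemma hex_y_rescaled_powr_expansion:
  "cubic_near_zero (\<lambda>u v. (1 + v/hex_y) powr t - (1 + t*(v/hex_y) + t*(t-1)/2*(v/hex_y)^2))"
proof -
  obtain K where K0: "K \<ge> 0" and K: "\<And>e. \<bar>e\<bar> \<le> 1/2 \<Longrightarrow>
      \<bar>(1 + e) powr t - (1 + t * e + t * (t - 1) / 2 * e^2)\<bar> \<le> K * \<bar>e\<bar>^3"
    using taylor2_one_plus_powr[of t] by blast
  show ?thesis
  proof (rule cubic_near_zeroI[of _ "8 * K"])
    fix u v :: real assume r: "\<bar>u\<bar> + \<bar>v\<bar> \<le> 1/12"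
    have w: "\<bar>v / hex_y\<bar> \<le> 2 * (\<bar>u\<bar> + \<bar>v\<bar>)" using abs_divide_hex_y_le[of v] by simp
    then have "\<bar>v / hex_y\<bar>^3 \<le> (2 * (\<bar>u\<bar> + \<bar>v\<bar>))^3" by (intro power_mono) auto
    then have "K * \<bar>v / hex_y\<bar>^3 \<le> K * (2 * (\<bar>u\<bar> + \<bar>v\<bar>))^3"
      using K0 by (rule mult_left_mono)
    also have "\<dots> = 8 * K * (\<bar>u\<bar> + \<bar>v\<bar>)^3" unfolding power_mult_distrib by simp
    finally have "K * \<bar>v / hex_y\<bar>^3 \<le> 8 * K * (\<bar>u\<bar> + \<bar>v\<bar>)^3" .
    with K[of "v / hex_y"] w r show "\<bar>(1 + v/hex_y) powr t - (1 + t*(v/hex_y) + t*(t-1)/2*(v/hex_y)^2)\<bar>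
        \<le> 8 * K * (\<bar>u\<bar> + \<bar>v\<bar>)^3" by simp
  qed
qed

lemma epstein_zeta_expansion:
  assumes t: "t > 1"
  shows "cubic_near_zero (\<lambda>u v. epstein_zeta t (1/2 + u) (hex_y + v)
                                  - hex_y powr t * S1 (t+2) * (3/2 + t*(t-1)/2*(u^2+v^2)))"
proof -
  define a where "a = S1 (t+2)"
  define G where "G = (\<lambda>v. 1 + t*(v/hex_y) + t*(t-1)/2*(v/hex_y)^2)"
  define M where "M = (\<lambda>u v. 3/2 + t*(t-1)/2*(u^2+v^2))"
  have G_bound: "\<bar>G v\<bar> \<le> 1 + t + t*(t-1)/2" if "\<bar>u\<bar> + \<bar>v\<bar> \<le> 1/12" for u v
  proof -
    have w: "\<bar>v / hex_y\<bar> \<le> 1" using abs_divide_hex_y_le[of v] that by linarith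
    then have "\<bar>v / hex_y\<bar>^2 \<le> 1" by (rule power_le_one[OF abs_ge_zero])
    then have "(v / hex_y)^2 \<le> 1" by (simp only: power2_abs)
    then have "t*(t-1)/2 * (v/hex_y)^2 \<le> t*(t-1)/2" using t by (simp add: mult_left_le)
    moreover have "\<bar>t * (v/hex_y)\<bar> \<le> t" using mult_left_mono[OF w, of t] t by (simp add: abs_mult)
    moreover have "0 \<le> t*(t-1)/2 * (v/hex_y)^2" using t by simp
    ultimately show ?thesis unfolding G_def by linarith
  qed
  have SS_bound: "\<bar>pert_sum t u v\<bar> \<le> 2 powr t * infsum (\<lambda>(m,n). hex_form m n powr (- t)) Zstar"
    if "\<bar>u\<bar> + \<bar>v\<bar> \<le> 1/12" for u v
    by (rule abs_pert_sum_le[OF t that])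
  have c1: "cubic_near_zero (\<lambda>u v. a * (G v * pert_mu t u v - M u v))"
    unfolding G_def M_def by (rule cubic_near_zero_cmult[OF pert_mu_rescaled_expansion[OF t]])
  have c2: "cubic_near_zero (\<lambda>u v. G v * (pert_sum t u v - a * pert_mu t u v))"
    unfolding a_def by (rule cubic_near_zero_mult_bounded[OF pert_sum_expansion[OF t] G_bound])
  have c3: "cubic_near_zero (\<lambda>u v. pert_sum t u v * ((1 + v/hex_y) powr t - G v))"
    unfolding G_def by (rule cubic_near_zero_mult_bounded[OF hex_y_rescaled_powr_expansion SS_bound])
  have "cubic_near_zero (\<lambda>u v. hex_y powr t * (a * (G v * pert_mu t u v - M u v)
      + G v * (pert_sum t u v - a * pert_mu t u v) + pert_sum t u v * ((1 + v/hex_y) powr t - G v)))"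
    by (intro cubic_near_zero_cmult cubic_near_zero_add c1 c2 c3)
  then show ?thesis
  proof (rule cubic_near_zero_cong)
    fix u v :: real assume "\<bar>u\<bar> + \<bar>v\<bar> \<le> 1/12"
    then show "hex_y powr t * (a * (G v * pert_mu t u v - M u v) + G v * (pert_sum t u v - a * pert_mu t u v)
        + pert_sum t u v * ((1 + v/hex_y) powr t - G v))
      = epstein_zeta t (1/2 + u) (hex_y + v) - hex_y powr t * S1 (t+2) * (3/2 + t*(t-1)/2*(u^2+v^2))"
      using epstein_zeta_pert_eq[of u v t] by (simp add: a_def M_def algebra_simps)
  qed
qed

section \<open>The Lennard-Jones energy\<close>

lemma V_LJ_mult:
  assumes A: "A > 0" and Q: "Q \<ge> 0"
  shows "V_LJ a1 a2 t1 t2 (A * Q) = a2 * A powr (- t2) * Q powr (- t2) - a1 * A powr (- t1) * Q powr (- t1)"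
proof -
  have "\<And>t. 1 / (A * Q) powr t = A powr (- t) * Q powr (- t)"
    using A Q by (simp add: powr_mult powr_minus divide_inverse)
  then show ?thesis unfolding V_LJ_def by (simp add: divide_inverse mult.assoc)
qed

lemma E_lat_LJ_eq_epstein_zeta:
  assumes A: "A > 0" and y: "y > 0"
    and s1: "epstein_term t1 x y summable_on Zstar" and s2: "epstein_term t2 x y summable_on Zstar"
  shows "E_lat (V_LJ a1 a2 t1 t2) x y A = a2 * A powr (- t2) * epstein_zeta t2 x y - a1 * A powr (- t1) * epstein_zeta t1 x y"
proof -
  have "E_lat (V_LJ a1 a2 t1 t2) x y A
      = infsum (\<lambda>p. (a2 * A powr (- t2)) * epstein_term t2 x y p + (- (a1 * A powr (- t1))) * epstein_term t1 x y p) Zstar"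
    unfolding E_lat_def
  proof (rule infsum_cong)
    fix p :: "int \<times> int" assume "p \<in> Zstar"
    obtain m n where p: "p = (m,n)" by (cases p)
    have Qn: "(real_of_int m + x * real_of_int n)^2 / y + y * (real_of_int n)^2 \<ge> 0" using y by simp
    show "(case p of (m, n) \<Rightarrow> V_LJ a1 a2 t1 t2 (A * ((real_of_int m + x * real_of_int n)\<^sup>2 / y + y * (real_of_int n)\<^sup>2)))
        = (a2 * A powr (- t2)) * epstein_term t2 x y p + (- (a1 * A powr (- t1))) * epstein_term t1 x y p"
      unfolding p epstein_term_def using V_LJ_mult[OF A Qn, of a1 a2 t1 t2] by simp
  qed
  also have "\<dots> = (a2 * A powr (- t2)) * infsum (epstein_term t2 x y) Zstar + (- (a1 * A powr (- t1))) * infsum (epstein_term t1 x y) Zstar"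
  proof -
    have "infsum (\<lambda>p. (a2 * A powr (- t2)) * epstein_term t2 x y p + (- (a1 * A powr (- t1))) * epstein_term t1 x y p) Zstar
        = infsum (\<lambda>p. (a2 * A powr (- t2)) * epstein_term t2 x y p) Zstar + infsum (\<lambda>p. (- (a1 * A powr (- t1))) * epstein_term t1 x y p) Zstar"
      by (rule infsum_add[OF summable_on_cmult_right[OF s2] summable_on_cmult_right[OF s1]])
    also have "\<dots> = (a2 * A powr (- t2)) * infsum (epstein_term t2 x y) Zstar + (- (a1 * A powr (- t1))) * infsum (epstein_term t1 x y) Zstar"
      by (simp only: infsum_cmult_right[OF s2] infsum_cmult_right[OF s1])
    finally show ?thesis .
  qed
  finally show ?thesis unfolding epstein_zeta_def by simp
qed

definition LJ_curvature :: "real \<Rightarrow> real \<Rightarrow> real \<Rightarrow> real \<Rightarrow> real \<Rightarrow> real" where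
  "LJ_curvature a1 a2 t1 t2 A =
     a2 * A powr (- t2) * (hex_y powr t2 * S1 (t2+2) * (t2*(t2-1)/2))
     - a1 * A powr (- t1) * (hex_y powr t1 * S1 (t1+2) * (t1*(t1-1)/2))"

lemma E_lat_LJ_expansion:
  assumes A: "A > 0" and t1: "t1 > 1" and t2: "t2 > 1"
  shows "cubic_near_zero (\<lambda>u v. E_lat (V_LJ a1 a2 t1 t2) (1/2 + u) (hex_y + v) A
      - E_lat (V_LJ a1 a2 t1 t2) (1/2) hex_y A - LJ_curvature a1 a2 t1 t2 A * (u^2 + v^2))"
proof -
  define b1 b2 where "b1 = a1 * A powr (- t1)" and "b2 = a2 * A powr (- t2)"
  define e where "e = (\<lambda>t u v. epstein_zeta t (1/2 + u) (hex_y + v)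
      - hex_y powr t * S1 (t+2) * (3/2 + t*(t-1)/2*(u^2+v^2)))"
  have E: "E_lat (V_LJ a1 a2 t1 t2) (1/2 + u) (hex_y + v) A
      = b2 * epstein_zeta t2 (1/2 + u) (hex_y + v) - b1 * epstein_zeta t1 (1/2 + u) (hex_y + v)"
    if "\<bar>u\<bar> + \<bar>v\<bar> \<le> 1/12" for u v
    unfolding b1_def b2_def
    by (rule E_lat_LJ_eq_epstein_zeta[OF A hex_y_plus_pos[OF that]
          summable_on_epstein_term_pert[OF t1 that] summable_on_epstein_term_pert[OF t2 that]])
  have e1: "cubic_near_zero (e t1)" and e2: "cubic_near_zero (e t2)"
    unfolding e_def by (rule epstein_zeta_expansion[OF t1], rule epstein_zeta_expansion[OF t2])
  have "cubic_near_zero (\<lambda>u v. b2 * e t2 u v - b1 * e t1 u v)"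
    by (intro cubic_near_zero_diff cubic_near_zero_cmult e1 e2)
  then show ?thesis
  proof (rule cubic_near_zero_cong)
    fix u v :: real assume r: "\<bar>u\<bar> + \<bar>v\<bar> \<le> 1/12"
    have Z1: "epstein_zeta t1 (1/2) hex_y = hex_y powr t1 * S1 (t1+2) * (3/2)"
      using cubic_near_zero_at_zero[OF e1] unfolding e_def by simp
    have Z2: "epstein_zeta t2 (1/2) hex_y = hex_y powr t2 * S1 (t2+2) * (3/2)"
      using cubic_near_zero_at_zero[OF e2] unfolding e_def by simp
    have E0: "E_lat (V_LJ a1 a2 t1 t2) (1/2) hex_y A
        = b2 * (hex_y powr t2 * S1 (t2+2) * (3/2)) - b1 * (hex_y powr t1 * S1 (t1+2) * (3/2))"
      using E[of 0 0] unfolding Z1[symmetric] Z2[symmetric] by simp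
    show "b2 * e t2 u v - b1 * e t1 u v = E_lat (V_LJ a1 a2 t1 t2) (1/2 + u) (hex_y + v) A
        - E_lat (V_LJ a1 a2 t1 t2) (1/2) hex_y A - LJ_curvature a1 a2 t1 t2 A * (u^2 + v^2)"
      unfolding E[OF r] E0 LJ_curvature_def b1_def[symmetric] b2_def[symmetric] e_def
      by (simp add: field_simps)
  qed
qed

lemma LJ_curvature_sign:
  fixes a1 a2 t1 t2 A :: real
  assumes a1: "a1 > 0" and a2: "a2 > 0" and t1: "1 < t1" and t12: "t1 < t2" and A: "A > 0"
  defines "A0 \<equiv> sqrt 3 / 2 *
      ((a2 * t2 * (t2 - 1) * S1 (t2 + 2)) / (a1 * t1 * (t1 - 1) * S1 (t1 + 2))) powr (1 / (t2 - t1))"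
  shows "(A < A0 \<longrightarrow> LJ_curvature a1 a2 t1 t2 A > 0) \<and> (A > A0 \<longrightarrow> LJ_curvature a1 a2 t1 t2 A < 0)"
proof -
  define D where "D = LJ_curvature a1 a2 t1 t2 A"
  define X1 where "X1 = a1 * t1 * (t1 - 1) * S1 (t1 + 2)"
  define X2 where "X2 = a2 * t2 * (t2 - 1) * S1 (t2 + 2)"
  define d where "d = t2 - t1"
  define R where "R = X2 / X1"
  define r' where "r' = R powr (1 / d)"
  define c where "c = A / hex_y"
  have d0: "d > 0" unfolding d_def using t12 by simp
  have X10: "X1 > 0" unfolding X1_def using a1 t1 S1_pos[of "t1+2"] by simp
  have X20: "X2 > 0" unfolding X2_def using a2 t1 t12 S1_pos[of "t2+2"] by simp
  have R0: "R > 0" unfolding R_def using X10 X20 by simp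
  have c0: "c > 0" unfolding c_def using A hex_y_pos by simp
  have A0e: "A0 = hex_y * r'" unfolding A0_def hex_y_def r'_def R_def X1_def X2_def d_def by simp
  have rd: "r' powr d = R" unfolding r'_def using R0 d0 by (simp add: powr_powr)
  have cp: "A powr (- t) * hex_y powr t = c powr (- t)" for t
  proof -
    have "(A / hex_y) powr (- t) = A powr (- t) / hex_y powr (- t)" using A hex_y_pos by (intro powr_divide)
    also have "\<dots> = A powr (- t) * hex_y powr t" by (simp add: powr_minus divide_inverse)
    finally show ?thesis unfolding c_def by simp
  qed
  have De: "D = (X2 * c powr (- t2) - X1 * c powr (- t1)) / 2"
  proof -
    have "D = (X2 * (A powr (- t2) * hex_y powr t2) - X1 * (A powr (- t1) * hex_y powr t1)) / 2"
      unfolding D_def LJ_curvature_def X1_def X2_def by (simp add: field_simps)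
    then show ?thesis unfolding cp .
  qed
  have ct1: "c powr (- t1) = c powr (- t2) * c powr d"
    unfolding d_def using c0 by (simp add: powr_add[symmetric])
  have De2: "D = c powr (- t2) / 2 * (X2 - X1 * c powr d)"
    unfolding De ct1 by (simp add: algebra_simps)
  have cpos: "c powr (- t2) > 0" using c0 by simp
  have lt: "D > 0" if "A < A0"
  proof -
    have "c < r'" using that hex_y_pos unfolding A0e c_def by (simp add: field_simps)
    then have "c powr d < r' powr d" using c0 d0 by (intro powr_less_mono2) auto
    then have "c powr d < R" using rd by simp
    then have "X1 * c powr d < X2" using X10 unfolding R_def by (simp add: field_simps)
    then show ?thesis unfolding De2 using cpos by simp
  qed
  have gt: "D < 0" if "A > A0"
  proof -
    have r'0: "r' \<ge> 0" unfolding r'_def by simp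
    have "r' < c" using that hex_y_pos unfolding A0e c_def by (simp add: field_simps)
    then have "r' powr d < c powr d" using r'0 d0 by (intro powr_less_mono2) auto
    then have "R < c powr d" using rd by simp
    then have "X2 < X1 * c powr d" using X10 unfolding R_def by (simp add: field_simps)
    then show ?thesis unfolding De2 using cpos by (simp add: mult_pos_neg)
  qed
  show ?thesis using lt gt unfolding D_def by blast
qed

theorem theorem4p2:
  fixes a1 a2 t1 t2 :: real
  assumes "a1 > 0" and "a2 > 0" and "1 < t1" and "t1 < t2"
  defines "A0 \<equiv> sqrt 3 / 2 *
      ((a2 * t2 * (t2 - 1) * S1 (t2 + 2)) / (a1 * t1 * (t1 - 1) * S1 (t1 + 2))) powr (1 / (t2 - t1))"
  shows "(\<forall>A. 0 < A \<and> A < A0 \<longrightarrow>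
            strict_local_min2 (\<lambda>x y. E_lat (V_LJ a1 a2 t1 t2) x y A) (1/2) (sqrt 3 / 2))
       \<and> (\<forall>A. A > A0 \<longrightarrow>
            strict_local_max2 (\<lambda>x y. E_lat (V_LJ a1 a2 t1 t2) x y A) (1/2) (sqrt 3 / 2))"
proof (intro conjI allI impI)
  have t2: "t2 > 1" using assms(3,4) by simp
  have expansion: "cubic_near_zero (\<lambda>u v. E_lat (V_LJ a1 a2 t1 t2) (1/2 + u) (sqrt 3 / 2 + v) A
      - E_lat (V_LJ a1 a2 t1 t2) (1/2) (sqrt 3 / 2) A - LJ_curvature a1 a2 t1 t2 A * (u^2 + v^2))"
    if "A > 0" for A
    using E_lat_LJ_expansion[OF that assms(3) t2] unfolding hex_y_def .
  have sign: "(A < A0 \<longrightarrow> LJ_curvature a1 a2 t1 t2 A > 0) \<and> (A > A0 \<longrightarrow> LJ_curvature a1 a2 t1 t2 A < 0)"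
    if "A > 0" for A
    using LJ_curvature_sign[OF assms(1-4) that] unfolding A0_def .
  fix A
  show "strict_local_min2 (\<lambda>x y. E_lat (V_LJ a1 a2 t1 t2) x y A) (1/2) (sqrt 3 / 2)"
    if "0 < A \<and> A < A0"
    using that sign expansion
    by (intro strict_local_min2_of_expansion[where D = "LJ_curvature a1 a2 t1 t2 A"]) auto
  show "strict_local_max2 (\<lambda>x y. E_lat (V_LJ a1 a2 t1 t2) x y A) (1/2) (sqrt 3 / 2)"
    if "A > A0"
  proof -
    have "A0 \<ge> 0" unfolding A0_def by simp
    then have "A > 0" using that by simp
    then show ?thesis using that sign expansion
      by (intro strict_local_max2_of_expansion[where D = "LJ_curvature a1 a2 t1 t2 A"]) auto
  qed
qed

end
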